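(* For any two trees $S$ and $T$, the set $Sh(S,T)$ with the percolation order is a finite distributive lattice.
   Context: A tree is a finite connected graph without cycles whose external edges are open. One external edge is the root; the others are leaves. Each vertex has one outgoing edge (towards the root) and a strictly positive number of incoming edges. No planar structure. Shuffle: for trees $S,T$ with root edges $r_S,r_T$, a shuffle is a tree $A$ with edges labelled by pairs $(s,t)\in E(S)\times E(T)$ such that: (1) the root of $A$ is labelled $(r_S,r_T)$; (2) the labelling restricts to a bijection from leaves of $A$ onto $\mathrm{Leaves}(S)\times\mathrm{Leaves}(T)$; (3) if an edge labelled $(s,t)$ is not a leaf, the incoming edges of the vertex of $A$ above it are labelled either exactly $(s_1,t),\dots,(s_m,t)$ for $s_1,\dots,s_m$ the edges immediately above $s$ in $S$ (an $S$-vertex), or exactly $(s,t_1),\dots,(s,t_n)$ for $t_1,\dots,t_n$ the edges immediately above $t$ in $T$ (a $T$-vertex). Shuffles are taken up to isomorphism of labelled trees; $Sh(S,T)$ is the set of shuffles. Percolation order: a single percolation step applies to a shuffle $A$ containing an edge $(s,t)$ whose vertex above is an $S$-vertex with incoming edges $(s_1,t),\dots,(s_m,t)$, each of which has above it a $T$-vertex with incoming edges $(s_i,t_1),\dots,(s_i,t_n)$; it replaces this configuration by a $T$-vertex above $(s,t)$ with incoming edges $(s,t_1),\dots,(s,t_n)$, each with an $S$-vertex above it with incoming edges $(s_1,t_j),\dots,(s_m,t_j)$, leaving everything above the edges $(s_i,t_j)$ unchanged. The percolation order on $Sh(S,T)$ is: $A\le B$ iff $B$ is obtained from $A$ by a finite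 (possibly empty) sequence of single percolation steps. *)

theory Defs
  imports "HOL-Algebra.Lattice"
begin

text \<open>A (non-planar) tree is given by its finite set of edges E, its root edge r,
  and the function ch assigning to each edge the set of edges immediately above it
  (the incoming edges of the vertex above it). An edge e with ch e = {} is a leaf
  (no vertex above it); otherwise there is a vertex above e whose incoming edges are
  exactly ch e (a strictly positive number of them).\<close>

type_synonym 'e tree = "'e set \<times> 'e \<times> ('e \<Rightarrow> 'e set)"

definition is_tree :: "'e set \<Rightarrow> 'e \<Rightarrow> ('e \<Rightarrow> 'e set) \<Rightarrow> bool" where
  "is_tree E r ch \<longleftrightarrow>
     finite E \<and> r \<in> E \<and>
     (\<forall>e\<in>E. ch e \<subseteq> E) \<and>
     (\<forall>e\<in>E. r \<notin> ch e) \<and>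
     (\<forall>e\<in>E. e \<noteq> r \<longrightarrow> (\<exists>!p. p \<in> E \<and> e \<in> ch p)) \<and>
     (\<forall>e\<in>E. (r, e) \<in> {(x, y). x \<in> E \<and> y \<in> ch x}\<^sup>*)"

definition tree :: "'e tree \<Rightarrow> bool" where
  "tree S = (case S of (E, r, ch) \<Rightarrow> is_tree E r ch)"

definition edges :: "'e tree \<Rightarrow> 'e set" where "edges S = fst S"
definition root :: "'e tree \<Rightarrow> 'e" where "root S = fst (snd S)"
definition above :: "'e tree \<Rightarrow> 'e \<Rightarrow> 'e set" where "above S = snd (snd S)"

definition leaves :: "'e tree \<Rightarrow> 'e set" where
  "leaves S = {e \<in> edges S. above S e = {}}"

text \<open>Labelled trees (candidate shuffles). Edges are taken from nat (any finite tree
  is isomorphic to one with edges in nat); labels are pairs of edges of S and T.\<close>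

type_synonym 'l ltree = "nat set \<times> nat \<times> (nat \<Rightarrow> nat set) \<times> (nat \<Rightarrow> 'l)"

definition ltree_tree :: "'l ltree \<Rightarrow> nat tree" where
  "ltree_tree A = (case A of (E, r, ch, lab) \<Rightarrow> (E, r, ch))"

definition lab :: "'l ltree \<Rightarrow> nat \<Rightarrow> 'l" where
  "lab A = snd (snd (snd A))"

definition is_shuffle :: "'e tree \<Rightarrow> 'f tree \<Rightarrow> ('e \<times> 'f) ltree \<Rightarrow> bool" where
  "is_shuffle S T A \<longleftrightarrow>
     (let U = ltree_tree A; l = lab A in
       tree U \<and>
       (\<forall>e\<in>edges U. l e \<in> edges S \<times> edges T) \<and>
       l (root U) = (root S, root T) \<and>
       bij_betw l (leaves U) (leaves S \<times> leaves T) \<and>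
       (\<forall>e\<in>edges U. above U e \<noteq> {} \<longrightarrow>
          (bij_betw l (above U e) ((\<lambda>s'. (s', snd (l e))) ` above S (fst (l e))) \<or>
           bij_betw l (above U e) ((\<lambda>t'. (fst (l e), t')) ` above T (snd (l e))))))"

definition ltree_iso :: "'l ltree \<Rightarrow> 'l ltree \<Rightarrow> bool" where
  "ltree_iso A B \<longleftrightarrow>
     (\<exists>\<phi>. bij_betw \<phi> (edges (ltree_tree A)) (edges (ltree_tree B)) \<and>
          \<phi> (root (ltree_tree A)) = root (ltree_tree B) \<and>
          (\<forall>e\<in>edges (ltree_tree A).
              above (ltree_tree B) (\<phi> e) = \<phi> ` above (ltree_tree A) e \<and>
              lab B (\<phi> e) = lab A e))"

definition Sh :: "'e tree \<Rightarrow> 'f tree \<Rightarrow> ('e \<times> 'f) ltree set set" where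
  "Sh S T = {{B. is_shuffle S T B \<and> ltree_iso A B} | A. is_shuffle S T A}"

text \<open>In A: the edge a labelled (s,t) has an S-vertex above it with incoming edges X,
  labelled (s_i,t); each x in X has a T-vertex above with incoming edges labelled
  (s_i,t_j). In B: phi(a) has a T-vertex above with incoming edges Y labelled (s,t_j),
  and each y in Y labelled (s,t_j) has an S-vertex above whose incoming edges are the
  (images of the) edges of A labelled (s_i,t_j), i.e. the edges above X in A whose
  T-component is t_j. Everything else is unchanged (phi is a label-preserving
  identification of the remaining edges, respecting the tree structure).\<close>

definition perc_step :: "'e tree \<Rightarrow> 'f tree \<Rightarrow> ('e \<times> 'f) ltree \<Rightarrow> ('e \<times> 'f) ltree \<Rightarrow> bool" where
  "perc_step S T A B \<longleftrightarrow>
     is_shuffle S T A \<and> is_shuffle S T B \<and>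
     (let UA = ltree_tree A; UB = ltree_tree B; lA = lab A; lB = lab B in
      \<exists>a X Y \<phi> s t.
        a \<in> edges UA \<and> lA a = (s, t) \<and> above UA a = X \<and>
        above S s \<noteq> {} \<and> above T t \<noteq> {} \<and>
        bij_betw lA X ((\<lambda>s'. (s', t)) ` above S s) \<and>
        (\<forall>x\<in>X. bij_betw lA (above UA x) ((\<lambda>t'. (fst (lA x), t')) ` above T t)) \<and>
        Y \<subseteq> edges UB \<and>
        bij_betw \<phi> (edges UA - X) (edges UB - Y) \<and>
        \<phi> (root UA) = root UB \<and>
        (\<forall>e\<in>edges UA - X. lB (\<phi> e) = lA e) \<and>
        (\<forall>e\<in>edges UA - X - {a}. above UB (\<phi> e) = \<phi> ` above UA e) \<and>
        above UB (\<phi> a) = Y \<and>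
        bij_betw lB Y ((\<lambda>t'. (s, t')) ` above T t) \<and>
        (\<forall>y\<in>Y. above UB y =
           \<phi> ` {e. \<exists>x\<in>X. e \<in> above UA x \<and> snd (lA e) = snd (lB y)}))"

definition perc_rel :: "'e tree \<Rightarrow> 'f tree \<Rightarrow> ('e \<times> 'f) ltree set \<Rightarrow> ('e \<times> 'f) ltree set \<Rightarrow> bool" where
  "perc_rel S T C D \<longleftrightarrow> C \<in> Sh S T \<and> D \<in> Sh S T \<and> (\<exists>A\<in>C. \<exists>B\<in>D. perc_step S T A B)"

definition perc_le :: "'e tree \<Rightarrow> 'f tree \<Rightarrow> ('e \<times> 'f) ltree set \<Rightarrow> ('e \<times> 'f) ltree set \<Rightarrow> bool" where
  "perc_le S T C D \<longleftrightarrow> C \<in> Sh S T \<and> D \<in> Sh S T \<and> (perc_rel S T)\<^sup>*\<^sup>* C D"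

definition Sh_poset :: "'e tree \<Rightarrow> 'f tree \<Rightarrow> ('e \<times> 'f) ltree set gorder" where
  "Sh_poset S T = \<lparr>carrier = Sh S T, eq = (=), le = perc_le S T\<rparr>"

definition distrib_lattice_on :: "('a, 'b) gorder_scheme \<Rightarrow> bool" where
  "distrib_lattice_on L \<longleftrightarrow> lattice L \<and>
     (\<forall>x\<in>carrier L. \<forall>y\<in>carrier L. \<forall>z\<in>carrier L.
        x \<sqinter>\<^bsub>L\<^esub> (y \<squnion>\<^bsub>L\<^esub> z) = (x \<sqinter>\<^bsub>L\<^esub> y) \<squnion>\<^bsub>L\<^esub> (x \<sqinter>\<^bsub>L\<^esub> z))"

end

theory Submission
  imports Defs
begin

text \<open>For inner edges a of S and b of T, record whether the T-vertex splitting b occurs in a shuffle A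
  below the S-vertex splitting a. The set of these pairs is a down-set of \<open>inner S \<times> inner T\<close>
  for the product order with the order of S reversed; every such ideal D is realised by a canonical
  shuffle, and two shuffles are isomorphic iff their ideals agree. A percolation step moves T-vertices
  below an S-vertex and so can only enlarge the ideal, while adding a single minimal pair is a
  percolation step of the canonical shuffles. Hence Sh(S, T) with the percolation order is isomorphic
  to a finite family of sets closed under union and intersection, ordered by inclusion, and is
  therefore a finite distributive lattice.\<close>

section \<open>Rooted trees\<close>

locale rooted_tree =
  fixes E :: "'a set" and r :: 'a and ch :: "'a \<Rightarrow> 'a set"
  assumes tree_axioms: "is_tree E r ch"
begin

definition child_rel :: "('a \<times> 'a) set" where "child_rel = {(x, y). x \<in> E \<and> y \<in> ch x}"

definition le :: "'a \<Rightarrow> 'a \<Rightarrow> bool" where "le x y \<longleftrightarrow> (x, y) \<in> child_rel\<^sup>*"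
definition lt :: "'a \<Rightarrow> 'a \<Rightarrow> bool" where "lt x y \<longleftrightarrow> le x y \<and> x \<noteq> y"
definition inner :: "'a set" where "inner = {x \<in> E. ch x \<noteq> {}}"
definition depth :: "'a \<Rightarrow> nat" where "depth x = card {y. le y x}"

lemma finite_E: "finite E" and root_in_E: "r \<in> E" and children_in_E: "x \<in> E \<Longrightarrow> ch x \<subseteq> E"
  and root_not_child: "x \<in> E \<Longrightarrow> r \<notin> ch x"
  and unique_parent: "x \<in> E \<Longrightarrow> x \<noteq> r \<Longrightarrow> \<exists>!p. p \<in> E \<and> x \<in> ch p"
  and reachable: "x \<in> E \<Longrightarrow> (r, x) \<in> child_rel\<^sup>*"
  using tree_axioms unfolding is_tree_def child_rel_def by auto

lemma child_in_E: "x \<in> E \<Longrightarrow> y \<in> ch x \<Longrightarrow> y \<in> E"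
  using children_in_E by auto

lemma same_parent: "p \<in> E \<Longrightarrow> q \<in> E \<Longrightarrow> x \<in> ch p \<Longrightarrow> x \<in> ch q \<Longrightarrow> p = q"
proof -
  assume a: "p \<in> E" "q \<in> E" "x \<in> ch p" "x \<in> ch q"
  then have "x \<in> E" "x \<noteq> r" using child_in_E root_not_child by auto
  then show "p = q" using unique_parent a by blast
qed

lemma le_refl [simp]: "le x x"
  unfolding le_def by simp

lemma le_trans: "le x y \<Longrightarrow> le y z \<Longrightarrow> le x z"
  unfolding le_def by simp

lemma le_child: "p \<in> E \<Longrightarrow> c \<in> ch p \<Longrightarrow> le p c"
  unfolding le_def child_rel_def by auto

lemma le_in_E: "le x y \<Longrightarrow> y \<in> E \<Longrightarrow> x \<in> E"
  unfolding le_def by (erule converse_rtranclE) (auto simp: child_rel_def)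

lemma le_child_cases: "le y c \<Longrightarrow> c \<in> ch p \<Longrightarrow> p \<in> E \<Longrightarrow> y = c \<or> le y p"
  unfolding le_def
proof (erule rtranclE)
  fix w assume "(y, w) \<in> child_rel\<^sup>*" "(w, c) \<in> child_rel" "c \<in> ch p" "p \<in> E"
  then have "w = p" using same_parent unfolding child_rel_def by auto
  then show "y = c \<or> (y, p) \<in> child_rel\<^sup>*" using \<open>(y, w) \<in> child_rel\<^sup>*\<close> by simp
qed simp

lemma le_root: "le x r \<Longrightarrow> x = r"
  unfolding le_def by (erule rtranclE) (auto simp: child_rel_def root_not_child)

lemma no_cycle: "x \<in> E \<Longrightarrow> (x, x) \<notin> child_rel\<^sup>+"
proof -
  assume "x \<in> E"
  then have "(r, x) \<in> child_rel\<^sup>*" by (rule reachable)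
  then show ?thesis
  proof (induction rule: rtrancl_induct)
    case base
    show ?case
    proof
      assume "(r, r) \<in> child_rel\<^sup>+"
      then obtain w where "(w, r) \<in> child_rel" by (auto elim: tranclE)
      then show False using root_not_child unfolding child_rel_def by auto
    qed
  next
    case (step y z)
    show ?case
    proof
      assume "(z, z) \<in> child_rel\<^sup>+"
      then obtain w where w: "(z, w) \<in> child_rel\<^sup>*" "(w, z) \<in> child_rel" using tranclD2 by metis
      have "w = y" using w(2) step(2) same_parent unfolding child_rel_def by auto
      then have "(y, y) \<in> child_rel\<^sup>+" using w step(2) by (meson rtrancl_into_trancl2)
      then show False using step(3) by simp
    qed
  qed
qed

lemma le_antisym: "le x y \<Longrightarrow> le y x \<Longrightarrow> x = y"
proof (rule ccontr)
  assume a: "le x y" "le y x" "x \<noteq> y"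
  then have "(x, y) \<in> child_rel\<^sup>+" unfolding le_def by (simp add: rtrancl_eq_or_trancl)
  then have "(x, x) \<in> child_rel\<^sup>+" using a(2) unfolding le_def by simp
  moreover have "x \<in> E" using \<open>(x, y) \<in> child_rel\<^sup>+\<close> by (auto elim: converse_tranclE simp: child_rel_def)
  ultimately show False using no_cycle by simp
qed

lemma not_le_child: "p \<in> E \<Longrightarrow> c \<in> ch p \<Longrightarrow> \<not> le c p"
proof
  assume a: "p \<in> E" "c \<in> ch p" "le c p"
  then have "(p, c) \<in> child_rel" unfolding child_rel_def by auto
  then have "(p, p) \<in> child_rel\<^sup>+" using a(3) unfolding le_def by (rule rtrancl_into_trancl2)
  then show False using no_cycle a(1) by simp
qed

lemma child_neq: "p \<in> E \<Longrightarrow> c \<in> ch p \<Longrightarrow> c \<noteq> p"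
  using not_le_child le_refl by blast

lemma lt_child: "p \<in> E \<Longrightarrow> c \<in> ch p \<Longrightarrow> lt p c"
  unfolding lt_def using le_child child_neq by auto

lemma lt_le_trans: "lt x y \<Longrightarrow> le y z \<Longrightarrow> lt x z"
  unfolding lt_def by (metis le_trans le_antisym)

lemma le_comparable: "le x z \<Longrightarrow> le y z \<Longrightarrow> z \<in> E \<Longrightarrow> le x y \<or> le y x"
proof -
  assume a: "le x z" "le y z" "z \<in> E"
  have "(r, z) \<in> child_rel\<^sup>*" using a(3) reachable by simp
  then show ?thesis using a(1,2)
  proof (induction arbitrary: x y rule: rtrancl_induct)
    case base then show ?case using le_root by auto
  next
    case (step p z)
    have pz: "p \<in> E" "z \<in> ch p" using step(2) unfolding child_rel_def by auto
    have "x = z \<or> le x p" using le_child_cases step(4) pz by auto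
    moreover have "y = z \<or> le y p" using le_child_cases step(5) pz by auto
    ultimately show ?case using step(3)[of x y] step(4,5) by auto
  qed
qed

lemma lt_through_child: "lt x y \<Longrightarrow> \<exists>c\<in>ch x. le c y \<and> x \<in> E"
proof -
  assume "lt x y"
  then have "(x, y) \<in> child_rel\<^sup>*" "x \<noteq> y" unfolding lt_def le_def by auto
  then obtain c where "(x, c) \<in> child_rel" "(c, y) \<in> child_rel\<^sup>*" by (metis converse_rtranclE)
  then show ?thesis unfolding child_rel_def le_def by auto
qed

lemma lt_inner: "lt x y \<Longrightarrow> x \<in> inner"
  using lt_through_child unfolding inner_def by blast

lemma leaf_le_eq: "le x y \<Longrightarrow> ch x = {} \<Longrightarrow> x = y"
  using lt_through_child[of x y] unfolding lt_def by auto

lemma depth_less: "lt x y \<Longrightarrow> y \<in> E \<Longrightarrow> depth x < depth y"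
  unfolding depth_def
proof (rule psubset_card_mono)
  assume a: "lt x y" "y \<in> E"
  show "finite {z. le z y}" by (rule finite_subset[OF _ finite_E]) (auto intro: le_in_E a(2))
  have "{z. le z x} \<subseteq> {z. le z y}" using a unfolding lt_def using le_trans by blast
  moreover have "y \<notin> {z. le z x}" using a le_antisym unfolding lt_def by blast
  ultimately show "{z. le z x} \<subset> {z. le z y}" by auto
qed

lemma depth_mono: "le x y \<Longrightarrow> y \<in> E \<Longrightarrow> depth x \<le> depth y"
  using depth_less lt_def by fastforce

lemma exists_leaf_above: "x \<in> E \<Longrightarrow> \<exists>l. le x l \<and> l \<in> E \<and> ch l = {}"
proof -
  assume x: "x \<in> E"
  let ?A = "{y \<in> E. le x y}"
  have bounded: "depth y < card E + 1" if "y \<in> ?A" for y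
  proof -
    have "{z. le z y} \<subseteq> E" using that le_in_E by blast
    then have "card {z. le z y} \<le> card E" by (rule card_mono[OF finite_E])
    then show ?thesis unfolding depth_def by simp
  qed
  have "x \<in> ?A" using x by simp
  then obtain l where l: "l \<in> ?A" "\<And>y. y \<in> ?A \<Longrightarrow> depth y \<le> depth l"
    using ex_has_greatest_nat[of "\<lambda>y. y \<in> ?A" x depth "card E + 1"] bounded by blast
  have "ch l = {}"
  proof (rule ccontr)
    assume "ch l \<noteq> {}"
    then obtain c where c: "c \<in> ch l" by auto
    have "l \<in> E" "le x l" using l(1) by auto
    then have "c \<in> ?A" using c child_in_E le_trans le_child by blast
    moreover have "depth l < depth c" using depth_less lt_child \<open>l \<in> E\<close> c child_in_E by blast
    ultimately show False using l(2) by force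
  qed
  then show ?thesis using l(1) by auto
qed

end

section \<open>Labelled trees\<close>

lemma tree_simps [simp]:
  "edges (E, r, ch) = E" "root (E, r, ch) = r" "above (E, r, ch) = ch"
  "leaves (E, r, ch) = {e \<in> E. ch e = {}}"
  by (auto simp: edges_def root_def above_def leaves_def)

lemma ltree_simps [simp]: "ltree_tree (E, r, ch, l) = (E, r, ch)" "lab (E, r, ch, l) = l"
  by (auto simp: ltree_tree_def lab_def)

definition nat_enum :: "'v set \<Rightarrow> nat \<Rightarrow> 'v" where
  "nat_enum V = (SOME h. bij_betw h {0..<card V} V)"

definition nat_index :: "'v set \<Rightarrow> 'v \<Rightarrow> nat" where
  "nat_index V = inv_into {0..<card V} (nat_enum V)"

lemma nat_enum_bij: "finite V \<Longrightarrow> bij_betw (nat_enum V) {0..<card V} V"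
  unfolding nat_enum_def by (rule someI_ex[OF ex_bij_betw_nat_finite])

lemma nat_index_bij: "finite V \<Longrightarrow> bij_betw (nat_index V) V {0..<card V}"
  unfolding nat_index_def by (rule bij_betw_inv_into[OF nat_enum_bij])

lemma nat_enum_index [simp]: "finite V \<Longrightarrow> z \<in> V \<Longrightarrow> nat_enum V (nat_index V z) = z"
  unfolding nat_index_def by (metis bij_betw_imp_surj_on f_inv_into_f nat_enum_bij)

lemma nat_index_enum [simp]: "finite V \<Longrightarrow> i < card V \<Longrightarrow> nat_index V (nat_enum V i) = i"
  unfolding nat_index_def by (metis atLeastLessThan_iff bij_betw_imp_inj_on inv_into_f_f nat_enum_bij zero_le)

lemma nat_enum_in: "finite V \<Longrightarrow> i < card V \<Longrightarrow> nat_enum V i \<in> V"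
  by (metis atLeastLessThan_iff bij_betwE nat_enum_bij zero_le)

lemma nat_index_less: "finite V \<Longrightarrow> z \<in> V \<Longrightarrow> nat_index V z < card V"
  by (metis atLeastLessThan_iff bij_betwE nat_index_bij)

lemma nat_enum_image_index: "finite V \<Longrightarrow> K \<subseteq> V \<Longrightarrow> nat_enum V ` nat_index V ` K = K"
  by (simp add: image_comp subset_iff cong: image_cong)

lemma bij_betw_nat_enum_image: "finite V \<Longrightarrow> K \<subseteq> V \<Longrightarrow> bij_betw (nat_enum V) (nat_index V ` K) K"
  by (rule bij_betw_subset[OF nat_enum_bij]) (auto simp: nat_index_less nat_enum_image_index subset_iff)

lemma nat_index_image_diff:
  assumes "finite V" "K \<subseteq> V"
  shows "{0..<card V} - nat_index V ` K = nat_index V ` (V - K)"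
proof -
  have "inj_on (nat_index V) V" using nat_index_bij[OF assms(1)] by (rule bij_betw_imp_inj_on)
  then have "nat_index V ` (V - K) = nat_index V ` V - nat_index V ` K"
    using inj_on_image_set_diff assms(2) by blast
  also have "nat_index V ` V = {0..<card V}" using nat_index_bij[OF assms(1)] by (rule bij_betw_imp_surj_on)
  finally show ?thesis by simp
qed

definition ltree_of :: "'v set \<Rightarrow> 'v \<Rightarrow> ('v \<Rightarrow> 'v set) \<Rightarrow> 'v ltree" where
  "ltree_of V r ch = ({0..<card V}, nat_index V r, \<lambda>i. nat_index V ` ch (nat_enum V i), nat_enum V)"

lemma ltree_of_simps [simp]:
  "ltree_tree (ltree_of V r ch) = ({0..<card V}, nat_index V r, \<lambda>i. nat_index V ` ch (nat_enum V i))"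
  "lab (ltree_of V r ch) = nat_enum V"
  by (simp_all add: ltree_of_def)

lemma tree_ltree_of:
  assumes "is_tree V r ch"
  shows "tree (ltree_tree (ltree_of V r ch))"
proof -
  interpret V: rooted_tree V r ch by (rule rooted_tree.intro[OF assms])
  let ?N = "{0..<card V}" and ?i = "nat_index V" and ?e = "nat_enum V"
  let ?ch = "\<lambda>n. ?i ` ch (?e n)"
  let ?rel = "{(m, n). m \<in> ?N \<and> n \<in> ?ch m}"
  have enum: "?e n \<in> V" "?i (?e n) = n" if "n \<in> ?N" for n
    using that V.finite_E nat_enum_in by auto
  have index: "?i z \<in> ?N" "?e (?i z) = z" if "z \<in> V" for z
    using that V.finite_E nat_index_less by auto
  have reach: "(?i r, ?i z) \<in> ?rel\<^sup>*" if "(r, z) \<in> V.child_rel\<^sup>*" for z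
    using that
  proof (induction rule: rtrancl_induct)
    case (step y z)
    then have "y \<in> V" "z \<in> ch y" unfolding V.child_rel_def by auto
    then have "(?i y, ?i z) \<in> ?rel" using index by auto
    with step.IH show ?case by (rule rtrancl_into_rtrancl)
  qed simp
  have "is_tree ?N (?i r) ?ch"
    unfolding is_tree_def
  proof (intro conjI ballI impI)
    show "finite ?N" by simp
    show "?i r \<in> ?N" using index V.root_in_E by blast
  next
    fix n assume n: "n \<in> ?N"
    show "?ch n \<subseteq> ?N" using index V.children_in_E[OF enum(1)[OF n]] by blast
    show "?i r \<notin> ?ch n"
    proof
      assume "?i r \<in> ?ch n"
      then obtain c where "c \<in> ch (?e n)" "?i r = ?i c" by auto
      then show False
        using index(2) V.root_in_E V.child_in_E[OF enum(1)[OF n]] V.root_not_child[OF enum(1)[OF n]]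
        by metis
    qed
    show "(?i r, n) \<in> ?rel\<^sup>*" using reach[OF V.reachable[OF enum(1)[OF n]]] enum(2)[OF n] by simp
  next
    fix n assume n: "n \<in> ?N" "n \<noteq> ?i r"
    then have "?e n \<in> V" "?e n \<noteq> r" using enum by auto
    then obtain p where p: "p \<in> V" "?e n \<in> ch p" using V.unique_parent by blast
    show "\<exists>!m. m \<in> ?N \<and> n \<in> ?ch m"
    proof (rule ex1I[of _ "?i p"])
      show "?i p \<in> ?N \<and> n \<in> ?ch (?i p)" using index p enum(2)[OF n(1)] by (metis imageI)
    next
      fix m assume m: "m \<in> ?N \<and> n \<in> ?ch m"
      then obtain c where c: "c \<in> ch (?e m)" "n = ?i c" by auto
      then have "?e n = c" using index(2) V.child_in_E enum(1) m by metis
      then have "?e m = p" using V.same_parent p c(1) enum(1) m by metis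
      then show "m = ?i p" using enum(2) m by metis
    qed
  qed
  then show ?thesis unfolding ltree_of_def tree_def by simp
qed

lemma is_shuffle_ltree_of:
  fixes S :: "'e tree" and T :: "'f tree"
  assumes tree: "is_tree V r ch" and labels: "V \<subseteq> edges S \<times> edges T"
    and root: "r = (root S, root T)"
    and leaves: "{z \<in> V. ch z = {}} = leaves S \<times> leaves T"
    and vertices: "\<And>z. z \<in> V \<Longrightarrow> ch z \<noteq> {} \<Longrightarrow>
      ch z = (\<lambda>s'. (s', snd z)) ` above S (fst z) \<or> ch z = (\<lambda>t'. (fst z, t')) ` above T (snd z)"
  shows "is_shuffle S T (ltree_of V r ch)"
proof -
  interpret V: rooted_tree V r ch by (rule rooted_tree.intro[OF tree])
  let ?N = "{0..<card V}" and ?i = "nat_index V" and ?e = "nat_enum V"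
  let ?ch = "\<lambda>n. ?i ` ch (?e n)"
  have fin: "finite V" by (rule V.finite_E)
  have ch_sub: "ch (?e n) \<subseteq> V" if "n \<in> ?N" for n
    using V.children_in_E nat_enum_in[OF fin] that by simp
  have "{n \<in> ?N. ?ch n = {}} = ?i ` {z \<in> V. ch z = {}}"
  proof (intro equalityI subsetI)
    fix n assume "n \<in> {n \<in> ?N. ?ch n = {}}"
    then show "n \<in> ?i ` {z \<in> V. ch z = {}}"
      using fin nat_enum_in nat_index_enum by (metis (mono_tags, lifting) atLeastLessThan_iff
          image_eqI image_is_empty mem_Collect_eq)
  next
    fix n assume "n \<in> ?i ` {z \<in> V. ch z = {}}"
    then show "n \<in> {n \<in> ?N. ?ch n = {}}" using fin nat_index_less by auto
  qed
  then have leaf_bij: "bij_betw ?e {n \<in> ?N. ?ch n = {}} (leaves S \<times> leaves T)"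
    using bij_betw_nat_enum_image[OF fin, of "{z \<in> V. ch z = {}}"] leaves by auto
  show ?thesis
    unfolding is_shuffle_def Let_def ltree_of_def ltree_simps tree_simps
  proof (intro conjI ballI impI)
    show "tree (?N, ?i r, ?ch)" using tree_ltree_of[OF tree] unfolding ltree_of_def by simp
    show "?e (?i r) = (root S, root T)" using nat_enum_index[OF fin V.root_in_E] root by simp
    show "bij_betw ?e {n \<in> ?N. ?ch n = {}} (leaves S \<times> leaves T)" by (rule leaf_bij)
  next
    fix n assume "n \<in> ?N"
    then show "?e n \<in> edges S \<times> edges T" using labels nat_enum_in[OF fin] by (meson atLeastLessThan_iff subsetD)
  next
    fix n assume n: "n \<in> ?N" and "?ch n \<noteq> {}"
    then have "ch (?e n) \<noteq> {}" by simp
    then have "ch (?e n) = (\<lambda>s'. (s', snd (?e n))) ` above S (fst (?e n)) \<or>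
        ch (?e n) = (\<lambda>t'. (fst (?e n), t')) ` above T (snd (?e n))"
      using vertices nat_enum_in[OF fin] n by simp
    moreover have "bij_betw ?e (?ch n) (ch (?e n))" by (rule bij_betw_nat_enum_image[OF fin ch_sub[OF n]])
    ultimately show "bij_betw ?e (?ch n) ((\<lambda>s'. (s', snd (?e n))) ` above S (fst (?e n))) \<or>
        bij_betw ?e (?ch n) ((\<lambda>t'. (fst (?e n), t')) ` above T (snd (?e n)))"
      by metis
  qed
qed

lemma ltree_iso_ltree_of:
  assumes fin: "finite V" and bij: "bij_betw (lab A) (edges (ltree_tree A)) V"
    and root: "lab A (root (ltree_tree A)) = r"
    and children: "\<And>e. e \<in> edges (ltree_tree A) \<Longrightarrow> ch (lab A e) = lab A ` above (ltree_tree A) e"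
  shows "ltree_iso A (ltree_of V r ch)"
  unfolding ltree_iso_def ltree_of_def ltree_simps tree_simps
proof (intro exI[of _ "nat_index V \<circ> lab A"] conjI ballI)
  show "bij_betw (nat_index V \<circ> lab A) (edges (ltree_tree A)) {0..<card V}"
    using bij_betw_trans[OF bij nat_index_bij[OF fin]] .
  show "(nat_index V \<circ> lab A) (root (ltree_tree A)) = nat_index V r" using root by simp
next
  fix e assume e: "e \<in> edges (ltree_tree A)"
  then have "lab A e \<in> V" using bij bij_betwE by blast
  then show "nat_index V ` ch (nat_enum V ((nat_index V \<circ> lab A) e)) =
      (nat_index V \<circ> lab A) ` above (ltree_tree A) e"
    and "nat_enum V ((nat_index V \<circ> lab A) e) = lab A e"
    using fin children[OF e] by (simp_all add: image_comp)
qed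

lemma bij_betw_reindex_diff:
  assumes fin: "finite V" "finite V'" and sub: "K \<subseteq> V" "K' \<subseteq> V'" and eq: "V - K = V' - K'"
  shows "bij_betw (nat_index V' \<circ> nat_enum V)
    ({0..<card V} - nat_index V ` K) ({0..<card V'} - nat_index V' ` K')"
proof -
  have "bij_betw (nat_enum V) (nat_index V ` (V - K)) (V - K)" using bij_betw_nat_enum_image[OF fin(1)] by blast
  moreover have "bij_betw (nat_index V') (V - K) (nat_index V' ` (V' - K'))"
    unfolding eq by (rule bij_betw_subset[OF nat_index_bij[OF fin(2)]]) blast+
  ultimately have "bij_betw (nat_index V' \<circ> nat_enum V) (nat_index V ` (V - K)) (nat_index V' ` (V' - K'))"
    by (rule bij_betw_trans)
  then show ?thesis unfolding nat_index_image_diff[OF fin(1) sub(1)] nat_index_image_diff[OF fin(2) sub(2)] .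
qed

lemma nat_index_image_children:
  assumes fin: "finite V" and X_sub: "X \<subseteq> V" and ch_sub: "\<And>x. x \<in> V \<Longrightarrow> ch x \<subseteq> V"
  shows "{n. \<exists>x\<in>nat_index V ` X. n \<in> nat_index V ` ch (nat_enum V x) \<and> P (nat_enum V n)} =
    nat_index V ` {z. \<exists>x\<in>X. z \<in> ch x \<and> P z}"
proof (intro equalityI subsetI)
  fix n assume "n \<in> {n. \<exists>x\<in>nat_index V ` X. n \<in> nat_index V ` ch (nat_enum V x) \<and> P (nat_enum V n)}"
  then obtain x z where xz: "x \<in> X" "z \<in> ch x" "n = nat_index V z" "P (nat_enum V n)"
    using X_sub fin by auto
  have "z \<in> V" using xz(1,2) X_sub ch_sub by blast
  then have "nat_enum V n = z" using xz(3) fin by simp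
  with xz show "n \<in> nat_index V ` {z. \<exists>x\<in>X. z \<in> ch x \<and> P z}" by auto
next
  fix n assume "n \<in> nat_index V ` {z. \<exists>x\<in>X. z \<in> ch x \<and> P z}"
  then obtain x z where xz: "x \<in> X" "z \<in> ch x" "P z" "n = nat_index V z" by auto
  have "x \<in> V" "z \<in> V" using xz(1,2) X_sub ch_sub by blast+
  then have "nat_enum V (nat_index V x) = x" "nat_enum V n = z" using xz(4) fin by simp_all
  then show "n \<in> {n. \<exists>x\<in>nat_index V ` X. n \<in> nat_index V ` ch (nat_enum V x) \<and> P (nat_enum V n)}"
    using xz by force
qed

lemma perc_step_ltree_of:
  fixes S :: "'e tree" and T :: "'f tree" and s :: 'e and t :: 'f
  defines "X \<equiv> (\<lambda>s'. (s', t)) ` above S s" and "Y \<equiv> (\<lambda>t'. (s, t')) ` above T t"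
  assumes shuffles: "is_shuffle S T (ltree_of V r ch)" "is_shuffle S T (ltree_of V' r ch')"
    and trees: "is_tree V r ch" "is_tree V' r ch'"
    and vertex: "(s, t) \<in> V" "above S s \<noteq> {}" "above T t \<noteq> {}"
    and before: "ch (s, t) = X" "\<And>x. x \<in> X \<Longrightarrow> ch x = (\<lambda>t'. (fst x, t')) ` above T t"
    and after: "ch' (s, t) = Y" "\<And>y. y \<in> Y \<Longrightarrow> ch' y = {z. \<exists>x\<in>X. z \<in> ch x \<and> snd z = snd y}"
    and unchanged: "V - X = V' - Y" "\<And>z. z \<in> V - X - {(s, t)} \<Longrightarrow> ch' z = ch z"
  shows "perc_step S T (ltree_of V r ch) (ltree_of V' r ch')"
proof -
  interpret A: rooted_tree V r ch by (rule rooted_tree.intro[OF trees(1)])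
  interpret B: rooted_tree V' r ch' by (rule rooted_tree.intro[OF trees(2)])
  let ?i = "nat_index V" and ?e = "nat_enum V" and ?i' = "nat_index V'" and ?e' = "nat_enum V'"
  let ?phi = "?i' \<circ> ?e"
  have fin: "finite V" "finite V'" by (rule A.finite_E, rule B.finite_E)
  have X_sub: "X \<subseteq> V" using A.children_in_E[OF vertex(1)] before(1) by simp
  have ch_sub: "ch z \<subseteq> V" if "z \<in> V" for z using A.children_in_E that .
  have st_notin_X: "(s, t) \<notin> X" using A.child_neq[OF vertex(1)] before(1) by blast
  have st_in_V': "(s, t) \<in> V'" using unchanged(1) vertex(1) st_notin_X by blast
  have Y_sub: "Y \<subseteq> V'" using B.children_in_E[OF st_in_V'] after(1) by simp
  have unchanged_bij: "bij_betw ?phi ({0..<card V} - ?i ` X) ({0..<card V'} - ?i' ` Y)"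
    by (rule bij_betw_reindex_diff[OF fin X_sub Y_sub unchanged(1)])
  have unchanged_edge: "\<exists>z. z \<in> V - X \<and> z \<in> V' \<and> n = ?i z \<and> ?e n = z \<and> ?phi n = ?i' z"
    if n: "n \<in> {0..<card V} - ?i ` X" for n
  proof -
    obtain z where z: "z \<in> V - X" "n = ?i z"
      using n unfolding nat_index_image_diff[OF fin(1) X_sub] by blast
    moreover have "?e n = z" using z fin(1) by simp
    moreover have "z \<in> V'" using z(1) unfolding unchanged(1) by blast
    ultimately show ?thesis by (intro exI[of _ z]) simp
  qed
  show ?thesis
    unfolding perc_step_def Let_def ltree_of_simps tree_simps
  proof (intro conjI[OF shuffles(1)] conjI[OF shuffles(2)], rule exI[of _ "?i (s, t)"],
      rule exI[of _ "?i ` X"], rule exI[of _ "?i' ` Y"], rule exI[of _ ?phi], rule exI[of _ s],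
      rule exI[of _ t], intro conjI ballI)
    show "?i (s, t) \<in> {0..<card V}" using nat_index_less fin vertex(1) by simp
    show "?e (?i (s, t)) = (s, t)" using fin vertex(1) by simp
    show "?i ` ch (?e (?i (s, t))) = ?i ` X" using fin vertex(1) before(1) by simp
    show "above S s \<noteq> {}" "above T t \<noteq> {}" by (fact vertex(2), fact vertex(3))
    show "bij_betw ?e (?i ` X) ((\<lambda>s'. (s', t)) ` above S s)"
      using bij_betw_nat_enum_image[OF fin(1) X_sub] unfolding X_def .
    show "?i' ` Y \<subseteq> {0..<card V'}" using Y_sub nat_index_less[OF fin(2)] by auto
    show "bij_betw ?phi ({0..<card V} - ?i ` X) ({0..<card V'} - ?i' ` Y)" by (rule unchanged_bij)
    show "?phi (?i r) = ?i' r" using fin A.root_in_E by simp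
    show "?i' ` ch' (?e' (?phi (?i (s, t)))) = ?i' ` Y" using fin vertex(1) st_in_V' after(1) by simp
    show "bij_betw ?e' (?i' ` Y) ((\<lambda>t'. (s, t')) ` above T t)"
      using bij_betw_nat_enum_image[OF fin(2) Y_sub] unfolding Y_def .
  next
    fix n assume "n \<in> ?i ` X"
    then obtain x where x: "x \<in> X" "n = ?i x" by auto
    have "x \<in> V" using x(1) X_sub by blast
    then have "?e n = x" "bij_betw ?e (?i ` ch x) (ch x)"
      using x(2) fin(1) bij_betw_nat_enum_image[OF fin(1) ch_sub] by simp_all
    then show "bij_betw ?e (?i ` ch (?e n)) ((\<lambda>t'. (fst (?e n), t')) ` above T t)"
      using before(2)[OF x(1)] by simp
  next
    fix n assume "n \<in> {0..<card V} - ?i ` X"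
    then obtain z where "z \<in> V'" "?e n = z" "?phi n = ?i' z" using unchanged_edge by blast
    then show "?e' (?phi n) = ?e n" using fin(2) by simp
  next
    fix n assume n: "n \<in> {0..<card V} - ?i ` X - {?i (s, t)}"
    then obtain z where z: "z \<in> V - X" "z \<in> V'" "?e n = z" "?phi n = ?i' z" "n = ?i z"
      using unchanged_edge by blast
    then have "z \<noteq> (s, t)" using n by auto
    then have "?i' ` ch' z = ?i' ` ?e ` ?i ` ch z"
      using unchanged(2) z(1) nat_enum_image_index[OF fin(1) ch_sub] by auto
    then show "?i' ` ch' (?e' (?phi n)) = ?phi ` ?i ` ch (?e n)"
      using z fin(2) by (simp add: image_comp)
  next
    fix n assume "n \<in> ?i' ` Y"
    then obtain y where y: "y \<in> Y" "n = ?i' y" by auto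
    then have ey: "?e' n = y" using Y_sub fin(2) by auto
    let ?M = "{z. \<exists>x\<in>X. z \<in> ch x \<and> snd z = snd y}"
    have "?M \<subseteq> V" using X_sub ch_sub by blast
    have "?phi ` ?i ` ?M = ?i' ` ?e ` ?i ` ?M" by (simp only: image_comp comp_assoc)
    also have "\<dots> = ?i' ` ?M" using nat_enum_image_index[OF fin(1) \<open>?M \<subseteq> V\<close>] by simp
    finally have "?phi ` ?i ` ?M = ?i' ` ?M" .
    moreover have "{m. \<exists>x\<in>?i ` X. m \<in> ?i ` ch (?e x) \<and> snd (?e m) = snd y} = ?i ` ?M"
      using nat_index_image_children[OF fin(1) X_sub ch_sub, where P = "\<lambda>z. snd z = snd y"] by simp
    ultimately show "?i' ` ch' (?e' n) =
        ?phi ` {m. \<exists>x\<in>?i ` X. m \<in> ?i ` ch (?e x) \<and> snd (?e m) = snd (?e' n)}"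
      using ey after(2)[OF y(1)] by simp
  qed
qed

definition has_T_vertex :: "('e \<times> 'f) ltree \<Rightarrow> nat \<Rightarrow> bool" where
  "has_T_vertex A e \<longleftrightarrow> above (ltree_tree A) e \<noteq> {} \<and>
     (\<forall>c\<in>above (ltree_tree A) e. fst (lab A c) = fst (lab A e))"

lemma has_T_vertex_ltree_of:
  assumes "finite V" "z \<in> V" "ch z \<subseteq> V"
  shows "has_T_vertex (ltree_of V r ch) (nat_index V z) \<longleftrightarrow> ch z \<noteq> {} \<and> (\<forall>k\<in>ch z. fst k = fst z)"
proof -
  have "\<forall>k\<in>ch z. nat_enum V (nat_index V k) = k" using assms by auto
  then show ?thesis unfolding has_T_vertex_def using assms by simp
qed

lemma ltree_iso_trans: "ltree_iso A B \<Longrightarrow> ltree_iso B C \<Longrightarrow> ltree_iso A C"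
proof -
  assume "ltree_iso A B" "ltree_iso B C"
  then obtain f g where f: "bij_betw f (edges (ltree_tree A)) (edges (ltree_tree B))"
    "f (root (ltree_tree A)) = root (ltree_tree B)"
    "\<forall>e\<in>edges (ltree_tree A). above (ltree_tree B) (f e) = f ` above (ltree_tree A) e \<and> lab B (f e) = lab A e"
    and g: "bij_betw g (edges (ltree_tree B)) (edges (ltree_tree C))"
    "g (root (ltree_tree B)) = root (ltree_tree C)"
    "\<forall>e\<in>edges (ltree_tree B). above (ltree_tree C) (g e) = g ` above (ltree_tree B) e \<and> lab C (g e) = lab B e"
    unfolding ltree_iso_def by blast
  show "ltree_iso A C" unfolding ltree_iso_def
  proof (intro exI[of _ "g \<circ> f"] conjI ballI)
    show "bij_betw (g \<circ> f) (edges (ltree_tree A)) (edges (ltree_tree C))" using bij_betw_trans[OF f(1) g(1)] .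
    show "(g \<circ> f) (root (ltree_tree A)) = root (ltree_tree C)" using f(2) g(2) by simp
  next
    fix e assume e: "e \<in> edges (ltree_tree A)"
    then have fe: "f e \<in> edges (ltree_tree B)" using bij_betwE[OF f(1)] by blast
    show "above (ltree_tree C) ((g \<circ> f) e) = (g \<circ> f) ` above (ltree_tree A) e"
      using f(3) g(3) e fe by (simp add: image_comp)
    show "lab C ((g \<circ> f) e) = lab A e" using f(3) g(3) e fe by simp
  qed
qed

lemma tree_above_subset: "tree U \<Longrightarrow> e \<in> edges U \<Longrightarrow> above U e \<subseteq> edges U"
  by (cases U) (auto simp: tree_def is_tree_def)

lemma tree_root_in_edges: "tree U \<Longrightarrow> root U \<in> edges U"
  by (cases U) (auto simp: tree_def is_tree_def)

lemma ltree_iso_sym: "tree (ltree_tree A) \<Longrightarrow> ltree_iso A B \<Longrightarrow> ltree_iso B A"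
proof -
  assume tA: "tree (ltree_tree A)" and "ltree_iso A B"
  then obtain f where f: "bij_betw f (edges (ltree_tree A)) (edges (ltree_tree B))"
    "f (root (ltree_tree A)) = root (ltree_tree B)"
    "\<forall>e\<in>edges (ltree_tree A). above (ltree_tree B) (f e) = f ` above (ltree_tree A) e \<and> lab B (f e) = lab A e"
    unfolding ltree_iso_def by blast
  let ?g = "inv_into (edges (ltree_tree A)) f"
  have inj: "inj_on f (edges (ltree_tree A))" using f(1) unfolding bij_betw_def by simp
  show "ltree_iso B A" unfolding ltree_iso_def
  proof (intro exI[of _ ?g] conjI ballI)
    show "bij_betw ?g (edges (ltree_tree B)) (edges (ltree_tree A))" using bij_betw_inv_into[OF f(1)] .
    show "?g (root (ltree_tree B)) = root (ltree_tree A)"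
      using f(2) inv_into_f_f[OF inj tree_root_in_edges[OF tA]] by simp
  next
    fix e' assume e': "e' \<in> edges (ltree_tree B)"
    then obtain e where e: "e \<in> edges (ltree_tree A)" "e' = f e" using f(1) unfolding bij_betw_def by auto
    have ge: "?g e' = e" using e inv_into_f_f[OF inj] by simp
    have sub: "above (ltree_tree A) e \<subseteq> edges (ltree_tree A)" using tree_above_subset[OF tA e(1)] .
    have "?g ` above (ltree_tree B) e' = ?g ` f ` above (ltree_tree A) e" using f(3) e by simp
    also have "\<dots> = above (ltree_tree A) e" using inv_into_image_cancel[OF inj sub] .
    finally show "above (ltree_tree A) (?g e') = ?g ` above (ltree_tree B) e'" using ge by simp
    show "lab A (?g e') = lab B e'" using ge f(3) e by simp
  qed
qed

lemma ltree_iso_refl: "ltree_iso A A"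
  unfolding ltree_iso_def by (intro exI[of _ id]) (auto simp: bij_betw_def)

lemma has_T_vertex_transfer:
  assumes "has_T_vertex A e" and "above (ltree_tree B) e' = f ` above (ltree_tree A) e"
    and "\<And>c. c \<in> above (ltree_tree A) e \<Longrightarrow> lab B (f c) = lab A c" and "lab B e' = lab A e"
  shows "has_T_vertex B e'"
  using assms unfolding has_T_vertex_def by auto

lemma perc_stepE:
  assumes "perc_step S T (EA, rA, chA, lA) (EB, rB, chB, lB)"
  obtains a X Y \<phi> s t where "a \<in> EA" "lA a = (s, t)" "chA a = X" "above S s \<noteq> {}" "above T t \<noteq> {}"
    "bij_betw lA X ((\<lambda>s'. (s', t)) ` above S s)" "Y \<subseteq> EB" "bij_betw \<phi> (EA - X) (EB - Y)"
    "\<forall>e\<in>EA - X. lB (\<phi> e) = lA e" "\<forall>e\<in>EA - X - {a}. chB (\<phi> e) = \<phi> ` chA e"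
    "chB (\<phi> a) = Y" "bij_betw lB Y ((\<lambda>t'. (s, t')) ` above T t)"
proof -
  from assms have "\<exists>a X Y \<phi> s t. a \<in> EA \<and> lA a = (s, t) \<and> chA a = X \<and> above S s \<noteq> {} \<and>
      above T t \<noteq> {} \<and> bij_betw lA X ((\<lambda>s'. (s', t)) ` above S s) \<and>
      (\<forall>x\<in>X. bij_betw lA (chA x) ((\<lambda>t'. (fst (lA x), t')) ` above T t)) \<and>
      Y \<subseteq> EB \<and> bij_betw \<phi> (EA - X) (EB - Y) \<and> \<phi> rA = rB \<and>
      (\<forall>e\<in>EA - X. lB (\<phi> e) = lA e) \<and>
      (\<forall>e\<in>EA - X - {a}. chB (\<phi> e) = \<phi> ` chA e) \<and>
      chB (\<phi> a) = Y \<and> bij_betw lB Y ((\<lambda>t'. (s, t')) ` above T t) \<and>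
      (\<forall>y\<in>Y. chB y = \<phi> ` {e. \<exists>x\<in>X. e \<in> chA x \<and> snd (lA e) = snd (lB y)})"
    unfolding perc_step_def Let_def ltree_simps tree_simps by simp
  then show ?thesis by (elim exE conjE) (rule that)
qed

section \<open>Lattices of sets\<close>

locale set_lattice_image =
  fixes C :: "'x set" and R :: "'x \<Rightarrow> 'x \<Rightarrow> bool" and F :: "'x \<Rightarrow> 'y set" and M :: "'y set set"
  assumes bij: "bij_betw F C M" and le_iff: "\<And>x y. x \<in> C \<Longrightarrow> y \<in> C \<Longrightarrow> R x y \<longleftrightarrow> F x \<subseteq> F y"
    and Un_closed: "\<And>A B. A \<in> M \<Longrightarrow> B \<in> M \<Longrightarrow> A \<union> B \<in> M"
    and Int_closed: "\<And>A B. A \<in> M \<Longrightarrow> B \<in> M \<Longrightarrow> A \<inter> B \<in> M"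
begin

abbreviation L :: "'x gorder" where "L \<equiv> \<lparr>carrier = C, eq = (=), le = R\<rparr>"

abbreviation G :: "'y set \<Rightarrow> 'x" where "G \<equiv> inv_into C F"

lemma G_in: "A \<in> M \<Longrightarrow> G A \<in> C"
  using bij by (metis bij_betw_def inv_into_into)

lemma F_G: "A \<in> M \<Longrightarrow> F (G A) = A"
  using bij by (metis bij_betw_def f_inv_into_f)

lemma F_in: "x \<in> C \<Longrightarrow> F x \<in> M"
  using bij bij_betwE by blast

lemma F_inj: "x \<in> C \<Longrightarrow> y \<in> C \<Longrightarrow> F x = F y \<Longrightarrow> x = y"
  using bij unfolding bij_betw_def inj_on_def by blast

sublocale partial_order L
proof (unfold_locales, simp_all)
  fix x assume "x \<in> C" then show "R x x" using le_iff by simp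
next
  fix x y assume "R x y" "R y x" "x \<in> C" "y \<in> C"
  then show "x = y" using le_iff F_inj by blast
next
  fix x y z assume "R x y" "R y z" "x \<in> C" "y \<in> C" "z \<in> C"
  then show "R x z" using le_iff by blast
qed

lemma least_G_Un:
  assumes "x \<in> C" "y \<in> C"
  shows "least L (G (F x \<union> F y)) (Upper L {x, y})"
proof -
  have "F x \<union> F y \<in> M" using Un_closed F_in assms by blast
  then show ?thesis unfolding least_def Upper_def using G_in F_G le_iff assms by (auto simp: all_conj_distrib)
qed

lemma greatest_G_Int:
  assumes "x \<in> C" "y \<in> C"
  shows "greatest L (G (F x \<inter> F y)) (Lower L {x, y})"
proof -
  have "F x \<inter> F y \<in> M" using Int_closed F_in assms by blast
  then show ?thesis unfolding greatest_def Lower_def using G_in F_G le_iff assms by (auto simp: all_conj_distrib)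
qed

lemma join_eq: "x \<in> C \<Longrightarrow> y \<in> C \<Longrightarrow> x \<squnion>\<^bsub>L\<^esub> y = G (F x \<union> F y)"
  using least_unique[OF _ least_G_Un] someI[of "\<lambda>s. least L s (Upper L {x, y})", OF least_G_Un]
  unfolding join_def sup_def by simp

lemma meet_eq: "x \<in> C \<Longrightarrow> y \<in> C \<Longrightarrow> x \<sqinter>\<^bsub>L\<^esub> y = G (F x \<inter> F y)"
  using greatest_unique[OF _ greatest_G_Int] someI[of "\<lambda>s. greatest L s (Lower L {x, y})", OF greatest_G_Int]
  unfolding meet_def inf_def by simp

lemma distrib_lattice: "distrib_lattice_on L"
  unfolding distrib_lattice_on_def
proof (intro conjI ballI)
  show "lattice L"
  proof unfold_locales
    fix x y assume "x \<in> carrier L" "y \<in> carrier L"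
    then show "\<exists>s. least L s (Upper L {x, y})" "\<exists>s. greatest L s (Lower L {x, y})"
      using least_G_Un[of x y] greatest_G_Int[of x y] by auto
  qed
next
  fix x y z assume "x \<in> carrier L" "y \<in> carrier L" "z \<in> carrier L"
  then have xyz: "x \<in> C" "y \<in> C" "z \<in> C" by simp_all
  have "F x \<inter> (F y \<union> F z) = (F x \<inter> F y) \<union> (F x \<inter> F z)" by blast
  then show "x \<sqinter>\<^bsub>L\<^esub> (y \<squnion>\<^bsub>L\<^esub> z) = (x \<sqinter>\<^bsub>L\<^esub> y) \<squnion>\<^bsub>L\<^esub> (x \<sqinter>\<^bsub>L\<^esub> z)"
    using xyz by (simp add: join_eq meet_eq G_in F_G F_in Un_closed Int_closed)
qed

end

section \<open>Ideals and canonical shuffles\<close>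

locale two_trees = S: rooted_tree ES rS chS + T: rooted_tree ET rT chT
  for ES :: "'e set" and rS :: 'e and chS :: "'e \<Rightarrow> 'e set"
  and ET :: "'f set" and rT :: 'f and chT :: "'f \<Rightarrow> 'f set"
begin

abbreviation S_tree :: "'e tree" where "S_tree \<equiv> (ES, rS, chS)"
abbreviation T_tree :: "'f tree" where "T_tree \<equiv> (ET, rT, chT)"

definition S_above :: "'e \<times> 'f \<Rightarrow> ('e \<times> 'f) set" where
  "S_above z = (\<lambda>s'. (s', snd z)) ` chS (fst z)"

definition T_above :: "'e \<times> 'f \<Rightarrow> ('e \<times> 'f) set" where
  "T_above z = (\<lambda>t'. (fst z, t')) ` chT (snd z)"

lemma S_above_fst_neq: "k \<in> S_above z \<Longrightarrow> fst z \<in> ES \<Longrightarrow> fst k \<noteq> fst z"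
  unfolding S_above_def using S.child_neq by auto

lemma inner_in_E: "a \<in> S.inner \<Longrightarrow> a \<in> ES" "b \<in> T.inner \<Longrightarrow> b \<in> ET"
  unfolding S.inner_def T.inner_def by auto

text \<open>A shuffle will be encoded by the set of pairs \<open>(a, b)\<close> of inner edges such that the T-vertex
  splitting b comes before (below) the S-vertex splitting a. These sets are exactly the down-sets
  of the following order, in which the order of S is reversed.\<close>

definition ideal_le :: "'e \<times> 'f \<Rightarrow> 'e \<times> 'f \<Rightarrow> bool" where
  "ideal_le y x \<longleftrightarrow> S.le (fst x) (fst y) \<and> T.le (snd y) (snd x)"

definition ideals :: "('e \<times> 'f) set set" where
  "ideals = {D. D \<subseteq> S.inner \<times> T.inner \<and>
     (\<forall>x\<in>D. \<forall>y\<in>S.inner \<times> T.inner. ideal_le y x \<longrightarrow> y \<in> D)}"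

lemma ideal_subset: "D \<in> ideals \<Longrightarrow> D \<subseteq> S.inner \<times> T.inner"
  unfolding ideals_def by blast

lemma ideal_T_down: "D \<in> ideals \<Longrightarrow> (a, b) \<in> D \<Longrightarrow> T.lt b' b \<Longrightarrow> (a, b') \<in> D"
  unfolding ideals_def ideal_le_def T.lt_def using T.lt_inner T.lt_def by fastforce

lemma ideal_S_up: "D \<in> ideals \<Longrightarrow> (a, b) \<in> D \<Longrightarrow> S.le a a' \<Longrightarrow> a' \<in> S.inner \<Longrightarrow> (a', b) \<in> D"
  unfolding ideals_def ideal_le_def by fastforce

lemma finite_inner_pairs: "finite (S.inner \<times> T.inner)"
  using S.finite_E T.finite_E unfolding S.inner_def T.inner_def by simp

lemma finite_ideal: "D \<in> ideals \<Longrightarrow> finite D"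
  using finite_subset[OF ideal_subset finite_inner_pairs] .

lemma finite_ideals: "finite ideals"
  using finite_inner_pairs by (rule finite_subset[rotated, OF finite_Pow_iff[THEN iffD2]]) (auto simp: ideals_def)

lemma ideals_Un: "D \<in> ideals \<Longrightarrow> D' \<in> ideals \<Longrightarrow> D \<union> D' \<in> ideals"
  and ideals_Int: "D \<in> ideals \<Longrightarrow> D' \<in> ideals \<Longrightarrow> D \<inter> D' \<in> ideals"
  unfolding ideals_def by blast+

text \<open>The canonical shuffle of an ideal D has the edge \<open>(a, b)\<close> iff the vertices on the
  way to it are consistent with D: the T-vertices of all \<open>b' < b\<close> come before the S-vertex of a,
  and the S-vertices of all \<open>a' < a\<close> come before the T-vertex of b. Above an edge \<open>(a, b)\<close> sits the
  S-vertex of a unless the T-vertex of b is due first.\<close>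

definition canonical_edge :: "('e \<times> 'f) set \<Rightarrow> 'e \<Rightarrow> 'f \<Rightarrow> bool" where
  "canonical_edge D a b \<longleftrightarrow> (a \<in> S.inner \<longrightarrow> (\<forall>b'. T.lt b' b \<longrightarrow> (a, b') \<in> D)) \<and>
     (b \<in> T.inner \<longrightarrow> (\<forall>a'. S.lt a' a \<longrightarrow> (a', b) \<notin> D))"

definition canonical_edges :: "('e \<times> 'f) set \<Rightarrow> ('e \<times> 'f) set" where
  "canonical_edges D = {(a, b). a \<in> ES \<and> b \<in> ET \<and> canonical_edge D a b}"

definition S_vertex_at :: "('e \<times> 'f) set \<Rightarrow> 'e \<times> 'f \<Rightarrow> bool" where
  "S_vertex_at D z \<longleftrightarrow> fst z \<in> S.inner \<and> (snd z \<notin> T.inner \<or> z \<notin> D)"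

definition T_vertex_at :: "('e \<times> 'f) set \<Rightarrow> 'e \<times> 'f \<Rightarrow> bool" where
  "T_vertex_at D z \<longleftrightarrow> snd z \<in> T.inner \<and> (fst z \<notin> S.inner \<or> z \<in> D)"

definition canonical_above :: "('e \<times> 'f) set \<Rightarrow> 'e \<times> 'f \<Rightarrow> ('e \<times> 'f) set" where
  "canonical_above D z =
     (if S_vertex_at D z then S_above z else if T_vertex_at D z then T_above z else {})"

definition canonical_shuffle :: "('e \<times> 'f) set \<Rightarrow> ('e \<times> 'f) ltree" where
  "canonical_shuffle D = ltree_of (canonical_edges D) (rS, rT) (canonical_above D)"

definition depth_sum :: "'e \<times> 'f \<Rightarrow> nat" where
  "depth_sum z = S.depth (fst z) + T.depth (snd z)"

lemma canonical_above_cases: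
  "z \<in> canonical_above D q \<Longrightarrow>
     (S_vertex_at D q \<and> z \<in> S_above q) \<or> (\<not> S_vertex_at D q \<and> T_vertex_at D q \<and> z \<in> T_above q)"
  unfolding canonical_above_def by (auto split: if_splits)

lemma canonical_above_empty_iff: "canonical_above D z = {} \<longleftrightarrow> fst z \<notin> S.inner \<and> snd z \<notin> T.inner"
  unfolding canonical_above_def S_vertex_at_def T_vertex_at_def S_above_def T_above_def
    S.inner_def T.inner_def by auto

lemma root_canonical: "(rS, rT) \<in> canonical_edges D"
  unfolding canonical_edges_def canonical_edge_def
  using S.root_in_E T.root_in_E S.le_root T.le_root S.lt_def T.lt_def by auto

lemma canonical_edges_subset: "canonical_edges D \<subseteq> ES \<times> ET"
  unfolding canonical_edges_def by auto

lemma finite_canonical_edges: "finite (canonical_edges D)"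
  using canonical_edges_subset finite_subset S.finite_E T.finite_E by blast

lemma leaf_canonical:
  "a \<in> ES \<Longrightarrow> chS a = {} \<Longrightarrow> b \<in> ET \<Longrightarrow> chT b = {} \<Longrightarrow> (a, b) \<in> canonical_edges D"
  unfolding canonical_edges_def canonical_edge_def S.inner_def T.inner_def by simp

lemma canonical_edge_S_child:
  assumes C: "canonical_edge D a b" and a: "a \<in> ES" "a1 \<in> chS a" and S_vertex: "S_vertex_at D (a, b)"
    and D: "D \<in> ideals"
  shows "canonical_edge D a1 b"
  unfolding canonical_edge_def
proof (intro conjI impI allI)
  fix b' assume "a1 \<in> S.inner" "T.lt b' b"
  moreover have "a \<in> S.inner" using S_vertex unfolding S_vertex_at_def by simp
  ultimately have "(a, b') \<in> D" using C unfolding canonical_edge_def by blast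
  then show "(a1, b') \<in> D" using ideal_S_up[OF D _ S.le_child[OF a]] \<open>a1 \<in> S.inner\<close> by blast
next
  fix a' assume bI: "b \<in> T.inner" and lt: "S.lt a' a1"
  then have "a' = a1 \<or> S.le a' a" using S.le_child_cases[OF _ a(2,1)] S.lt_def by auto
  then have "a' = a \<or> S.lt a' a" using lt S.lt_def by auto
  then show "(a', b) \<notin> D" using C S_vertex bI unfolding S_vertex_at_def canonical_edge_def by auto
qed

lemma canonical_edge_T_child:
  assumes C: "canonical_edge D a b" and b: "b \<in> ET" "b1 \<in> chT b" and T_vertex: "T_vertex_at D (a, b)"
    and D: "D \<in> ideals"
  shows "canonical_edge D a b1"
  unfolding canonical_edge_def
proof (intro conjI impI allI)
  fix b' assume aI: "a \<in> S.inner" and lt: "T.lt b' b1"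
  then have "b' = b1 \<or> T.le b' b" using T.le_child_cases[OF _ b(2,1)] T.lt_def by auto
  then have "b' = b \<or> T.lt b' b" using lt T.lt_def by auto
  then show "(a, b') \<in> D" using C T_vertex aI unfolding T_vertex_at_def canonical_edge_def by auto
next
  fix a' assume "b1 \<in> T.inner" "S.lt a' a"
  moreover have "b \<in> T.inner" using T_vertex unfolding T_vertex_at_def by simp
  ultimately show "(a', b1) \<notin> D"
    using C ideal_T_down[OF D _ T.lt_child[OF b]] unfolding canonical_edge_def by blast
qed

lemma canonical_above_closed:
  assumes D: "D \<in> ideals" and z: "(a, b) \<in> canonical_edges D" and c: "c \<in> canonical_above D (a, b)"
  shows "c \<in> canonical_edges D"
proof -
  have ab: "a \<in> ES" "b \<in> ET" "canonical_edge D a b" using z unfolding canonical_edges_def by auto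
  from canonical_above_cases[OF c] show ?thesis
  proof
    assume h: "S_vertex_at D (a, b) \<and> c \<in> S_above (a, b)"
    then obtain a1 where a1: "a1 \<in> chS a" "c = (a1, b)" unfolding S_above_def by auto
    then show ?thesis using canonical_edge_S_child[OF ab(3) ab(1) a1(1) _ D] h S.child_in_E[OF ab(1)] ab(2)
      unfolding canonical_edges_def by auto
  next
    assume h: "\<not> S_vertex_at D (a, b) \<and> T_vertex_at D (a, b) \<and> c \<in> T_above (a, b)"
    then obtain b1 where b1: "b1 \<in> chT b" "c = (a, b1)" unfolding T_above_def by auto
    then show ?thesis using canonical_edge_T_child[OF ab(3) ab(2) b1(1) _ D] h T.child_in_E[OF ab(2)] ab(1)
      unfolding canonical_edges_def by auto
  qed
qed

lemma root_notin_canonical_above: "q \<in> canonical_edges D \<Longrightarrow> (rS, rT) \<notin> canonical_above D q"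
proof
  assume q: "q \<in> canonical_edges D" and r: "(rS, rT) \<in> canonical_above D q"
  have "q \<in> ES \<times> ET" using q canonical_edges_subset by blast
  then have "fst q \<in> ES" "snd q \<in> ET" by (auto simp: mem_Times_iff)
  then show False using canonical_above_cases[OF r] S.root_not_child T.root_not_child unfolding S_above_def T_above_def by auto
qed

text \<open>The two parents \<open>(pa, b)\<close> and \<open>(a, pb)\<close> would disagree on whether \<open>(pa, pb) \<in> D\<close>.\<close>

lemma canonical_S_T_parent_clash:
  assumes q: "q \<in> canonical_edges D" and q': "q' \<in> canonical_edges D"
    and S: "S_vertex_at D q" "z \<in> S_above q" and T: "T_vertex_at D q'" "z \<in> T_above q'"
  shows False
proof -
  obtain a b where zab: "z = (a, b)" by fastforce
  obtain pa where q1: "q = (pa, b)" "a \<in> chS pa" using S(2) zab unfolding S_above_def by (cases q) auto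
  obtain pb where q2: "q' = (a, pb)" "b \<in> chT pb" using T(2) zab unfolding T_above_def by (cases q') auto
  have "pa \<in> ES" "pb \<in> ET" using q q' q1 q2 canonical_edges_subset by auto
  have "pa \<in> S.inner" using S(1) q1 unfolding S_vertex_at_def by auto
  moreover have "T.lt pb b" using T.lt_child[OF \<open>pb \<in> ET\<close> q2(2)] .
  ultimately have "(pa, pb) \<in> D" using q q1 unfolding canonical_edges_def canonical_edge_def by auto
  moreover have "pb \<in> T.inner" using T(1) q2 unfolding T_vertex_at_def by auto
  moreover have "S.lt pa a" using S.lt_child[OF \<open>pa \<in> ES\<close> q1(2)] .
  ultimately show False using q' q2 unfolding canonical_edges_def canonical_edge_def by auto
qed

lemma canonical_parent_unique:
  assumes q: "q \<in> canonical_edges D" and q': "q' \<in> canonical_edges D"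
    and z: "z \<in> canonical_above D q" and z': "z \<in> canonical_above D q'"
  shows "q = q'"
proof -
  have "q \<in> ES \<times> ET" "q' \<in> ES \<times> ET" using q q' canonical_edges_subset by blast+
  then have qE: "fst q \<in> ES" "snd q \<in> ET" "fst q' \<in> ES" "snd q' \<in> ET" by (auto simp: mem_Times_iff)
  from canonical_above_cases[OF z] canonical_above_cases[OF z'] show ?thesis
  proof (elim disjE conjE)
    assume "z \<in> S_above q" "z \<in> S_above q'"
    then show ?thesis using qE S.same_parent unfolding S_above_def by (cases q, cases q') auto
  next
    assume "z \<in> T_above q" "z \<in> T_above q'"
    then show ?thesis using qE T.same_parent unfolding T_above_def by (cases q, cases q') auto
  qed (use canonical_S_T_parent_clash q q' in blast)+
qed

lemma canonical_above_subset:
  "D \<in> ideals \<Longrightarrow> z \<in> canonical_edges D \<Longrightarrow> canonical_above D z \<subseteq> canonical_edges D"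
  using canonical_above_closed by (cases z) auto

lemma canonical_above_S_parent:
  assumes C: "canonical_edge D a b" and pa: "pa \<in> ES" "a \<in> chS pa"
  shows "(a, b) \<in> canonical_above D (pa, b)"
proof -
  have "S.lt pa a" using S.lt_child[OF pa] .
  then have "b \<notin> T.inner \<or> (pa, b) \<notin> D" using C unfolding canonical_edge_def by auto
  moreover have "pa \<in> S.inner" using pa unfolding S.inner_def by auto
  ultimately have "S_vertex_at D (pa, b)" unfolding S_vertex_at_def by auto
  then show ?thesis using pa unfolding canonical_above_def S_above_def by auto
qed

lemma canonical_above_T_parent:
  assumes C: "canonical_edge D a b" and pb: "pb \<in> ET" "b \<in> chT pb"
  shows "(a, b) \<in> canonical_above D (a, pb)"
proof -
  have "T.lt pb b" using T.lt_child[OF pb] .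
  then have "a \<notin> S.inner \<or> (a, pb) \<in> D" using C unfolding canonical_edge_def by auto
  moreover have "pb \<in> T.inner" using pb unfolding T.inner_def by auto
  ultimately have "\<not> S_vertex_at D (a, pb)" "T_vertex_at D (a, pb)"
    unfolding S_vertex_at_def T_vertex_at_def by auto
  then show ?thesis using pb unfolding canonical_above_def T_above_def by auto
qed

text \<open>If neither parent edge of \<open>(a, b)\<close> were canonical, D would contain \<open>(pa, pb)\<close> by one
  failure and miss it by the other.\<close>

lemma canonical_edge_parent_cases:
  assumes D: "D \<in> ideals" and C: "canonical_edge D a b"
    and pa: "pa \<in> ES" "a \<in> chS pa" and pb: "pb \<in> ET" "b \<in> chT pb"
  shows "canonical_edge D pa b \<or> canonical_edge D a pb"
proof (rule ccontr)
  have C_pa: "b \<in> T.inner \<longrightarrow> (\<forall>a'. S.lt a' pa \<longrightarrow> (a', b) \<notin> D)"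
    using C S.lt_le_trans[OF _ S.le_child[OF pa]] unfolding canonical_edge_def by blast
  have C_pb: "a \<in> S.inner \<longrightarrow> (\<forall>b'. T.lt b' pb \<longrightarrow> (a, b') \<in> D)"
    using C T.lt_le_trans[OF _ T.le_child[OF pb]] unfolding canonical_edge_def by blast
  assume "\<not> (canonical_edge D pa b \<or> canonical_edge D a pb)"
  then obtain b' a' where h: "pa \<in> S.inner" "T.lt b' b" "(pa, b') \<notin> D"
    "pb \<in> T.inner" "S.lt a' a" "(a', pb) \<in> D"
    using C_pa C_pb unfolding canonical_edge_def by blast
  have "a' = a \<or> S.le a' pa" using S.le_child_cases[OF _ pa(2) pa(1)] h(5) S.lt_def by auto
  then have "S.le a' pa" using h(5) S.lt_def by auto
  then have "(pa, pb) \<in> D" using ideal_S_up[OF D h(6) _ h(1)] by auto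
  have "b' = b \<or> T.le b' pb" using T.le_child_cases[OF _ pb(2) pb(1)] h(2) T.lt_def by auto
  then have "b' = pb \<or> T.lt b' pb" using h(2) T.lt_def by auto
  then show False using \<open>(pa, pb) \<in> D\<close> h(3) ideal_T_down[OF D \<open>(pa, pb) \<in> D\<close>] by auto
qed

lemma canonical_parent_edge:
  assumes D: "D \<in> ideals" and z: "(a, b) \<in> canonical_edges D" and nr: "(a, b) \<noteq> (rS, rT)"
  shows "(\<exists>pa. pa \<in> ES \<and> a \<in> chS pa \<and> (pa, b) \<in> canonical_edges D) \<or>
    (\<exists>pb. pb \<in> ET \<and> b \<in> chT pb \<and> (a, pb) \<in> canonical_edges D)"
proof -
  have ab: "a \<in> ES" "b \<in> ET" and C: "canonical_edge D a b" using z unfolding canonical_edges_def by auto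
  have noltS: "\<not> S.lt a' rS" for a' using S.le_root S.lt_def by auto
  have noltT: "\<not> T.lt b' rT" for b' using T.le_root T.lt_def by auto
  show ?thesis
  proof (cases "a = rS")
    case True
    then have "b \<noteq> rT" using nr by auto
    then obtain pb where pb: "pb \<in> ET" "b \<in> chT pb" using T.unique_parent ab(2) by blast
    have "canonical_edge D a pb" unfolding canonical_edge_def
    proof (intro conjI impI allI)
      fix b' assume "a \<in> S.inner" "T.lt b' pb"
      then show "(a, b') \<in> D"
        using C T.lt_le_trans[OF \<open>T.lt b' pb\<close> T.le_child[OF pb]] unfolding canonical_edge_def by auto
    next
      fix a' assume "S.lt a' a" then show "(a', pb) \<notin> D" using True noltS by auto
    qed
    then show ?thesis using pb ab unfolding canonical_edges_def by auto
  next
    case False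
    then obtain pa where pa: "pa \<in> ES" "a \<in> chS pa" using S.unique_parent ab(1) by blast
    show ?thesis
    proof (cases "b = rT")
      case True
      have "b \<in> T.inner \<longrightarrow> (\<forall>a'. S.lt a' pa \<longrightarrow> (a', b) \<notin> D)"
        using C S.lt_le_trans[OF _ S.le_child[OF pa]] unfolding canonical_edge_def by blast
      then have "canonical_edge D pa b" unfolding canonical_edge_def using True noltT by auto
      then show ?thesis using pa ab unfolding canonical_edges_def by auto
    next
      case False
      then obtain pb where pb: "pb \<in> ET" "b \<in> chT pb" using T.unique_parent ab(2) by blast
      have "canonical_edge D pa b \<or> canonical_edge D a pb"
        using canonical_edge_parent_cases[OF D C pa pb] .
      then show ?thesis using pa pb ab unfolding canonical_edges_def by auto
    qed
  qed
qed

lemma canonical_parent: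
  assumes D: "D \<in> ideals" and z: "(a, b) \<in> canonical_edges D" and nr: "(a, b) \<noteq> (rS, rT)"
  shows "\<exists>q\<in>canonical_edges D. (a, b) \<in> canonical_above D q \<and> depth_sum q < depth_sum (a, b)"
proof -
  have ab: "a \<in> ES" "b \<in> ET" and C: "canonical_edge D a b" using z unfolding canonical_edges_def by auto
  from canonical_parent_edge[OF D z nr] show ?thesis
  proof (elim disjE exE conjE)
    fix pa assume pa: "pa \<in> ES" "a \<in> chS pa" "(pa, b) \<in> canonical_edges D"
    have "depth_sum (pa, b) < depth_sum (a, b)"
      unfolding depth_sum_def using S.depth_less[OF S.lt_child[OF pa(1,2)] ab(1)] by simp
    then show ?thesis using canonical_above_S_parent[OF C pa(1,2)] pa(3) by blast
  next
    fix pb assume pb: "pb \<in> ET" "b \<in> chT pb" "(a, pb) \<in> canonical_edges D"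
    have "depth_sum (a, pb) < depth_sum (a, b)"
      unfolding depth_sum_def using T.depth_less[OF T.lt_child[OF pb(1,2)] ab(2)] by simp
    then show ?thesis using canonical_above_T_parent[OF C pb(1,2)] pb(3) by blast
  qed
qed

lemma is_tree_canonical:
  assumes D: "D \<in> ideals"
  shows "is_tree (canonical_edges D) (rS, rT) (canonical_above D)"
proof -
  let ?rel = "{(x, y). x \<in> canonical_edges D \<and> y \<in> canonical_above D x}"
  have reach: "((rS, rT), z) \<in> ?rel\<^sup>*" if "z \<in> canonical_edges D" for z
    using that
  proof (induction "depth_sum z" arbitrary: z rule: less_induct)
    case less
    show ?case
    proof (cases "z = (rS, rT)")
      case False
      then obtain q where "q \<in> canonical_edges D" "z \<in> canonical_above D q" "depth_sum q < depth_sum z"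
        using canonical_parent[OF D] less.prems by (cases z) blast
      then show ?thesis using less.hyps[of q] by (auto intro: rtrancl_into_rtrancl)
    qed simp
  qed
  show ?thesis
    unfolding is_tree_def
  proof (intro conjI ballI impI)
    show "finite (canonical_edges D)" by (rule finite_canonical_edges)
    show "(rS, rT) \<in> canonical_edges D" by (rule root_canonical)
  next
    fix z assume z: "z \<in> canonical_edges D"
    show "canonical_above D z \<subseteq> canonical_edges D" using canonical_above_subset[OF D z] .
    show "(rS, rT) \<notin> canonical_above D z" using root_notin_canonical_above[OF z] .
    show "((rS, rT), z) \<in> ?rel\<^sup>*" using reach[OF z] .
  next
    fix z assume z: "z \<in> canonical_edges D" "z \<noteq> (rS, rT)"
    then obtain q where q: "q \<in> canonical_edges D" "z \<in> canonical_above D q"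
      using canonical_parent[OF D] by (cases z) blast
    then show "\<exists>!q. q \<in> canonical_edges D \<and> z \<in> canonical_above D q"
      using canonical_parent_unique by blast
  qed
qed

lemma canonical_leaves:
  "{z \<in> canonical_edges D. canonical_above D z = {}} = {a \<in> ES. chS a = {}} \<times> {b \<in> ET. chT b = {}}"
  using canonical_edges_subset leaf_canonical unfolding canonical_above_empty_iff S.inner_def T.inner_def
  by fastforce

lemma canonical_shuffle_is_shuffle:
  assumes D: "D \<in> ideals"
  shows "is_shuffle S_tree T_tree (canonical_shuffle D)"
  unfolding canonical_shuffle_def
proof (rule is_shuffle_ltree_of[OF is_tree_canonical[OF D]])
  show "canonical_edges D \<subseteq> edges S_tree \<times> edges T_tree" using canonical_edges_subset by simp
  show "{z \<in> canonical_edges D. canonical_above D z = {}} = leaves S_tree \<times> leaves T_tree"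
    using canonical_leaves by simp
next
  fix z assume "canonical_above D z \<noteq> {}"
  then show "canonical_above D z = (\<lambda>s'. (s', snd z)) ` above S_tree (fst z) \<or>
      canonical_above D z = (\<lambda>t'. (fst z, t')) ` above T_tree (snd z)"
    unfolding canonical_above_def S_above_def T_above_def by (auto split: if_splits)
qed simp

definition ideal_of :: "('e \<times> 'f) ltree \<Rightarrow> ('e \<times> 'f) set" where
  "ideal_of A = {(a, b). a \<in> S.inner \<and> b \<in> T.inner \<and>
     (\<exists>e\<in>edges (ltree_tree A). snd (lab A e) = b \<and> S.le (fst (lab A e)) a \<and> has_T_vertex A e)}"

lemma ideal_of_ltree_of:
  assumes fin: "finite V" and ch_sub: "\<And>z. z \<in> V \<Longrightarrow> ch z \<subseteq> V"
  shows "ideal_of (ltree_of V r ch) = {(a, b). a \<in> S.inner \<and> b \<in> T.inner \<and>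
    (\<exists>z\<in>V. snd z = b \<and> S.le (fst z) a \<and> ch z \<noteq> {} \<and> (\<forall>k\<in>ch z. fst k = fst z))}"
proof -
  have "(\<exists>n\<in>{0..<card V}. snd (nat_enum V n) = b \<and> S.le (fst (nat_enum V n)) a \<and>
        has_T_vertex (ltree_of V r ch) n) \<longleftrightarrow>
      (\<exists>z\<in>V. snd z = b \<and> S.le (fst z) a \<and> ch z \<noteq> {} \<and> (\<forall>k\<in>ch z. fst k = fst z))"
    (is "?L \<longleftrightarrow> ?R") for a b
  proof
    assume ?L
    then obtain n where n: "n < card V" "snd (nat_enum V n) = b \<and> S.le (fst (nat_enum V n)) a"
      "has_T_vertex (ltree_of V r ch) n" by auto
    then have z: "nat_enum V n \<in> V" "has_T_vertex (ltree_of V r ch) (nat_index V (nat_enum V n))"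
      using fin nat_enum_in by simp_all
    then show ?R
      using has_T_vertex_ltree_of[where ch = ch, OF fin z(1) ch_sub[OF z(1)]] n(2) by blast
  next
    assume ?R
    then obtain z where z: "z \<in> V" "snd z = b \<and> S.le (fst z) a" "ch z \<noteq> {} \<and> (\<forall>k\<in>ch z. fst k = fst z)" by blast
    then have "has_T_vertex (ltree_of V r ch) (nat_index V z)"
      using has_T_vertex_ltree_of[where ch = ch, OF fin z(1) ch_sub[OF z(1)]] by blast
    then show ?L
      using z fin nat_index_less[OF fin z(1)] by (intro bexI[of _ "nat_index V z"]) auto
  qed
  then show ?thesis unfolding ideal_of_def ltree_of_simps tree_simps by simp
qed

lemma canonical_T_vertex_iff:
  assumes "z \<in> canonical_edges D"
  shows "canonical_above D z \<noteq> {} \<and> (\<forall>k\<in>canonical_above D z. fst k = fst z) \<longleftrightarrow>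
    \<not> S_vertex_at D z \<and> T_vertex_at D z"
proof
  assume h: "canonical_above D z \<noteq> {} \<and> (\<forall>k\<in>canonical_above D z. fst k = fst z)"
  have "fst z \<in> ES" using assms unfolding canonical_edges_def by (cases z) auto
  then have "\<not> S_vertex_at D z"
    using h S_above_fst_neq unfolding canonical_above_def by (metis (full_types) ex_in_conv)
  then show "\<not> S_vertex_at D z \<and> T_vertex_at D z"
    using h unfolding canonical_above_def by (auto split: if_splits)
next
  assume h: "\<not> S_vertex_at D z \<and> T_vertex_at D z"
  then have "canonical_above D z = T_above z" "T_above z \<noteq> {}"
    unfolding canonical_above_def T_vertex_at_def T_above_def T.inner_def by auto
  then show "canonical_above D z \<noteq> {} \<and> (\<forall>k\<in>canonical_above D z. fst k = fst z)"
    unfolding T_above_def by auto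
qed

lemma ideal_of_canonical_T_vertex:
  assumes D: "D \<in> ideals"
  shows "ideal_of (canonical_shuffle D) = {(a, b). a \<in> S.inner \<and> b \<in> T.inner \<and>
    (\<exists>s. (s, b) \<in> canonical_edges D \<and> S.le s a \<and> \<not> S_vertex_at D (s, b) \<and> T_vertex_at D (s, b))}"
proof -
  have "(\<exists>z\<in>canonical_edges D. snd z = b \<and> S.le (fst z) a \<and> canonical_above D z \<noteq> {} \<and>
        (\<forall>k\<in>canonical_above D z. fst k = fst z)) \<longleftrightarrow>
      (\<exists>s. (s, b) \<in> canonical_edges D \<and> S.le s a \<and> \<not> S_vertex_at D (s, b) \<and> T_vertex_at D (s, b))"
    for a b
  proof
    assume "\<exists>z\<in>canonical_edges D. snd z = b \<and> S.le (fst z) a \<and> canonical_above D z \<noteq> {} \<and>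
        (\<forall>k\<in>canonical_above D z. fst k = fst z)"
    then obtain z where z: "z \<in> canonical_edges D" "snd z = b" "S.le (fst z) a"
        "canonical_above D z \<noteq> {} \<and> (\<forall>k\<in>canonical_above D z. fst k = fst z)"
      by blast
    then have "\<not> S_vertex_at D z \<and> T_vertex_at D z" using canonical_T_vertex_iff by blast
    then show "\<exists>s. (s, b) \<in> canonical_edges D \<and> S.le s a \<and> \<not> S_vertex_at D (s, b) \<and> T_vertex_at D (s, b)"
      using z by (intro exI[of _ "fst z"]) auto
  next
    assume "\<exists>s. (s, b) \<in> canonical_edges D \<and> S.le s a \<and> \<not> S_vertex_at D (s, b) \<and> T_vertex_at D (s, b)"
    then obtain s where s: "(s, b) \<in> canonical_edges D" "S.le s a" "\<not> S_vertex_at D (s, b) \<and> T_vertex_at D (s, b)"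
      by blast
    then have "canonical_above D (s, b) \<noteq> {} \<and> (\<forall>k\<in>canonical_above D (s, b). fst k = fst (s, b))"
      using canonical_T_vertex_iff by blast
    then show "\<exists>z\<in>canonical_edges D. snd z = b \<and> S.le (fst z) a \<and> canonical_above D z \<noteq> {} \<and>
        (\<forall>k\<in>canonical_above D z. fst k = fst z)"
      using s by (intro bexI[of _ "(s, b)"]) auto
  qed
  moreover have "ideal_of (canonical_shuffle D) = {(a, b). a \<in> S.inner \<and> b \<in> T.inner \<and>
      (\<exists>z\<in>canonical_edges D. snd z = b \<and> S.le (fst z) a \<and> canonical_above D z \<noteq> {} \<and>
        (\<forall>k\<in>canonical_above D z. fst k = fst z))}"
    unfolding canonical_shuffle_def
    by (rule ideal_of_ltree_of[OF finite_canonical_edges canonical_above_subset[OF D]])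
  ultimately show ?thesis by simp
qed

text \<open>An element \<open>(a, b)\<close> of D is witnessed by the lowest \<open>s \<le> a\<close> with \<open>(s, b) \<in> D\<close>.\<close>

lemma ideal_subset_ideal_of_canonical:
  assumes D: "D \<in> ideals" and ab: "(a, b) \<in> D"
  shows "\<exists>s. (s, b) \<in> canonical_edges D \<and> S.le s a \<and> \<not> S_vertex_at D (s, b) \<and> T_vertex_at D (s, b)"
proof -
  have abI: "a \<in> S.inner" "b \<in> T.inner" using ideal_subset[OF D] ab by auto
  let ?P = "\<lambda>s. S.le s a \<and> (s, b) \<in> D"
  obtain s where s: "?P s" "\<And>y. ?P y \<Longrightarrow> S.depth s \<le> S.depth y"
    using ex_has_least_nat[of ?P a S.depth] ab by auto
  have sI: "s \<in> S.inner" using s(1) ideal_subset[OF D] by auto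
  have sE: "s \<in> ES" and bE: "b \<in> ET" using sI abI inner_in_E by auto
  have "canonical_edge D s b" unfolding canonical_edge_def
  proof (intro conjI impI allI)
    fix b' assume "T.lt b' b" then show "(s, b') \<in> D" using ideal_T_down[OF D] s(1) by auto
  next
    fix a' assume lt: "S.lt a' s"
    show "(a', b) \<notin> D"
    proof
      assume "(a', b) \<in> D"
      moreover have "S.le a' a" using lt s(1) S.lt_def S.le_trans by blast
      ultimately have "S.depth s \<le> S.depth a'" using s(2) by auto
      moreover have "S.depth a' < S.depth s" using S.depth_less[OF lt sE] .
      ultimately show False by simp
    qed
  qed
  then have "(s, b) \<in> canonical_edges D" using sE bE unfolding canonical_edges_def by simp
  moreover have "\<not> S_vertex_at D (s, b) \<and> T_vertex_at D (s, b)"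
    using s(1) abI sI unfolding S_vertex_at_def T_vertex_at_def by auto
  ultimately show ?thesis using s(1) by blast
qed

lemma ideal_of_canonical:
  assumes D: "D \<in> ideals"
  shows "ideal_of (canonical_shuffle D) = D"
proof (intro equalityI subsetI)
  fix x assume "x \<in> ideal_of (canonical_shuffle D)"
  then obtain a b s where x: "x = (a, b)" "a \<in> S.inner" "S.le s a" "T_vertex_at D (s, b)"
    "\<not> S_vertex_at D (s, b)"
    unfolding ideal_of_canonical_T_vertex[OF D] by blast
  have "s \<in> S.inner" using x(2,3) S.lt_inner S.lt_def by blast
  then have "(s, b) \<in> D" using x(4) unfolding T_vertex_at_def by simp
  then show "x \<in> D" using ideal_S_up[OF D _ x(3) x(2)] x(1) by simp
next
  fix x assume "x \<in> D"
  then show "x \<in> ideal_of (canonical_shuffle D)"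
    unfolding ideal_of_canonical_T_vertex[OF D] using ideal_subset[OF D] ideal_subset_ideal_of_canonical[OF D]
    by (cases x) blast
qed

end

section \<open>The ideal of a shuffle\<close>

locale labelled_shuffle = two_trees ES rS chS ET rT chT + U: rooted_tree EU rU chU
  for ES :: "'e set" and rS chS and ET :: "'f set" and rT chT and EU :: "nat set" and rU chU +
  fixes l :: "nat \<Rightarrow> 'e \<times> 'f"
  assumes shuffle: "is_shuffle (ES, rS, chS) (ET, rT, chT) (EU, rU, chU, l)"
begin

abbreviation A :: "('e \<times> 'f) ltree" where "A \<equiv> (EU, rU, chU, l)"

lemma lab_in: "e \<in> EU \<Longrightarrow> l e \<in> ES \<times> ET"
  and lab_root: "l rU = (rS, rT)"
  and lab_leaves: "bij_betw l {e \<in> EU. chU e = {}} ({e \<in> ES. chS e = {}} \<times> {e \<in> ET. chT e = {}})"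
  and lab_vertex: "e \<in> EU \<Longrightarrow> chU e \<noteq> {} \<Longrightarrow>
    bij_betw l (chU e) (S_above (l e)) \<or> bij_betw l (chU e) (T_above (l e))"
  using shuffle unfolding is_shuffle_def Let_def ltree_simps tree_simps S_above_def T_above_def by auto

lemma lab_components: "e \<in> EU \<Longrightarrow> fst (l e) \<in> ES" "e \<in> EU \<Longrightarrow> snd (l e) \<in> ET"
  using lab_in by (auto simp: mem_Times_iff)

definition S_vertex where "S_vertex e \<longleftrightarrow> bij_betw l (chU e) (S_above (l e)) \<and> fst (l e) \<in> S.inner"
definition T_vertex where "T_vertex e \<longleftrightarrow> bij_betw l (chU e) (T_above (l e)) \<and> snd (l e) \<in> T.inner"

lemma vertex_cases: "e \<in> EU \<Longrightarrow> chU e \<noteq> {} \<Longrightarrow> S_vertex e \<or> T_vertex e"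
proof -
  assume e: "e \<in> EU" "chU e \<noteq> {}"
  from lab_vertex[OF e] show ?thesis
  proof
    assume b: "bij_betw l (chU e) (S_above (l e))"
    then have "S_above (l e) \<noteq> {}" using e(2) bij_betw_empty2 by (metis bij_betw_imp_surj_on image_is_empty)
    then have "fst (l e) \<in> S.inner" unfolding S_above_def S.inner_def using lab_components[OF e(1)] by auto
    then show ?thesis using b unfolding S_vertex_def by auto
  next
    assume b: "bij_betw l (chU e) (T_above (l e))"
    then have "T_above (l e) \<noteq> {}" using e(2) by (metis bij_betw_imp_surj_on image_is_empty)
    then have "snd (l e) \<in> T.inner" unfolding T_above_def T.inner_def using lab_components[OF e(1)] by auto
    then show ?thesis using b unfolding T_vertex_def by auto
  qed
qed

lemma S_vertex_image: "S_vertex e \<Longrightarrow> l ` chU e = S_above (l e)" unfolding S_vertex_def bij_betw_def by auto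
lemma T_vertex_image: "T_vertex e \<Longrightarrow> l ` chU e = T_above (l e)" unfolding T_vertex_def bij_betw_def by auto

lemma child_label_cases: "e \<in> EU \<Longrightarrow> c \<in> chU e \<Longrightarrow>
    (S_vertex e \<and> l c \<in> S_above (l e)) \<or> (T_vertex e \<and> l c \<in> T_above (l e))"
proof -
  assume e: "e \<in> EU" "c \<in> chU e"
  then have "chU e \<noteq> {}" by auto
  then show ?thesis using vertex_cases[OF e(1)] S_vertex_image T_vertex_image e(2) by blast
qed

lemma has_T_vertex_iff: "e \<in> EU \<Longrightarrow> has_T_vertex A e \<longleftrightarrow> (chU e \<noteq> {} \<and> T_vertex e)"
proof -
  assume e: "e \<in> EU"
  have TV: "has_T_vertex A e \<longleftrightarrow> chU e \<noteq> {} \<and> (\<forall>c\<in>chU e. fst (l c) = fst (l e))"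
    unfolding has_T_vertex_def by simp
  show ?thesis
  proof
    assume h: "has_T_vertex A e"
    then have ne: "chU e \<noteq> {}" and fc: "\<forall>c\<in>chU e. fst (l c) = fst (l e)" using TV by auto
    then obtain c where c: "c \<in> chU e" by auto
    have "\<not> S_vertex e"
    proof
      assume "S_vertex e"
      then have "l c \<in> S_above (l e)" using S_vertex_image c by auto
      then have "fst (l c) \<noteq> fst (l e)" using S_above_fst_neq lab_components(1)[OF e] by blast
      then show False using fc c by blast
    qed
    then show "chU e \<noteq> {} \<and> T_vertex e" using vertex_cases[OF e ne] ne by auto
  next
    assume h: "chU e \<noteq> {} \<and> T_vertex e"
    have "\<forall>c\<in>chU e. fst (l c) = fst (l e)"
    proof
      fix c assume "c \<in> chU e"
      then have "l c \<in> T_above (l e)" using T_vertex_image h by blast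
      then show "fst (l c) = fst (l e)" unfolding T_above_def by auto
    qed
    then show "has_T_vertex A e" using TV h by auto
  qed
qed

lemma lab_mono: "U.le e e' \<Longrightarrow> e \<in> EU \<Longrightarrow> S.le (fst (l e)) (fst (l e')) \<and> T.le (snd (l e)) (snd (l e'))"
  unfolding U.le_def
proof (induction rule: rtrancl_induct)
  case base then show ?case by simp
next
  case (step y z)
  have y: "y \<in> EU" "z \<in> chU y" using step(2) unfolding U.child_rel_def by auto
  have ih: "S.le (fst (l e)) (fst (l y)) \<and> T.le (snd (l e)) (snd (l y))" using step by auto
  from child_label_cases[OF y] show ?case
  proof
    assume "S_vertex y \<and> l z \<in> S_above (l y)"
    then have "snd (l z) = snd (l y)" "fst (l z) \<in> chS (fst (l y))" unfolding S_above_def by auto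
    then show ?thesis using ih S.le_trans S.le_child[OF lab_components(1)[OF y(1)]] by auto
  next
    assume "T_vertex y \<and> l z \<in> T_above (l y)"
    then have "fst (l z) = fst (l y)" "snd (l z) \<in> chT (snd (l y))" unfolding T_above_def by auto
    then show ?thesis using ih T.le_trans T.le_child[OF lab_components(2)[OF y(1)]] by auto
  qed
qed

lemma lab_neq_above: assumes e: "e \<in> EU" and le: "U.le e e'" and ne: "e \<noteq> e'" shows "l e \<noteq> l e'"
proof
  assume eq: "l e = l e'"
  obtain c where c: "c \<in> chU e" "U.le c e'" using U.lt_through_child[of e e'] le ne U.lt_def by auto
  have cE: "c \<in> EU" using U.child_in_E e c(1) .
  have m: "S.le (fst (l c)) (fst (l e')) \<and> T.le (snd (l c)) (snd (l e'))" using lab_mono[OF c(2) cE] .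
  have fe: "fst (l e) \<in> ES" "snd (l e) \<in> ET" using lab_components[OF e] by auto
  from child_label_cases[OF e c(1)] show False
  proof
    assume "S_vertex e \<and> l c \<in> S_above (l e)"
    then have h: "fst (l c) \<in> chS (fst (l e))" unfolding S_above_def by auto
    then have "S.le (fst (l c)) (fst (l e))" using m eq by simp
    then show False using S.not_le_child[OF fe(1) h] by simp
  next
    assume "T_vertex e \<and> l c \<in> T_above (l e)"
    then have h: "snd (l c) \<in> chT (snd (l e))" unfolding T_above_def by auto
    then have "T.le (snd (l c)) (snd (l e))" using m eq by simp
    then show False using T.not_le_child[OF fe(2) h] by simp
  qed
qed

lemma leaf_label: "e \<in> EU \<Longrightarrow> chU e = {} \<Longrightarrow> chS (fst (l e)) = {} \<and> chT (snd (l e)) = {}"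
proof -
  assume "e \<in> EU" "chU e = {}"
  then have "e \<in> {e \<in> EU. chU e = {}}" by simp
  then have "l e \<in> {e \<in> ES. chS e = {}} \<times> {e \<in> ET. chT e = {}}" using bij_betwE[OF lab_leaves] by blast
  then show ?thesis by (auto simp: mem_Times_iff)
qed

lemma child_towards_leaf:
  assumes e: "e \<in> EU" "chU e \<noteq> {}" and le: "S.le (fst (l e)) ls" "T.le (snd (l e)) lt"
    and leaves: "chS ls = {}" "chT lt = {}"
  shows "\<exists>c\<in>chU e. S.le (fst (l c)) ls \<and> T.le (snd (l c)) lt \<and> depth_sum (l e) < depth_sum (l c)"
proof -
  have fe: "fst (l e) \<in> ES" "snd (l e) \<in> ET" using lab_components[OF e(1)] by auto
  from vertex_cases[OF e] show ?thesis
  proof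
    assume sv: "S_vertex e"
    then have "fst (l e) \<noteq> ls" using leaves(1) unfolding S_vertex_def S.inner_def by auto
    then obtain si where si: "si \<in> chS (fst (l e))" "S.le si ls"
      using S.lt_through_child[of "fst (l e)" ls] le(1) S.lt_def by auto
    then have "(si, snd (l e)) \<in> l ` chU e" using S_vertex_image[OF sv] unfolding S_above_def by auto
    then obtain c where c: "c \<in> chU e" "l c = (si, snd (l e))" by (metis imageE)
    have "S.depth (fst (l e)) < S.depth si" using S.depth_less[OF S.lt_child[OF fe(1) si(1)]] S.child_in_E fe(1) si(1) by auto
    then show ?thesis using c si(2) le(2) unfolding depth_sum_def by (intro bexI[of _ c]) auto
  next
    assume tv: "T_vertex e"
    then have "snd (l e) \<noteq> lt" using leaves(2) unfolding T_vertex_def T.inner_def by auto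
    then obtain ti where ti: "ti \<in> chT (snd (l e))" "T.le ti lt"
      using T.lt_through_child[of "snd (l e)" lt] le(2) T.lt_def by auto
    then have "(fst (l e), ti) \<in> l ` chU e" using T_vertex_image[OF tv] unfolding T_above_def by auto
    then obtain c where c: "c \<in> chU e" "l c = (fst (l e), ti)" by (metis imageE)
    have "T.depth (snd (l e)) < T.depth ti" using T.depth_less[OF T.lt_child[OF fe(2) ti(1)]] T.child_in_E fe(2) ti(1) by auto
    then show ?thesis using c ti(2) le(1) unfolding depth_sum_def by (intro bexI[of _ c]) auto
  qed
qed

lemma leaf_above_label:
  assumes "e \<in> EU" "S.le (fst (l e)) ls" "T.le (snd (l e)) lt" and leaves: "chS ls = {}" "chT lt = {}"
    and "ls \<in> ES" "lt \<in> ET"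
  shows "\<exists>x\<in>EU. U.le e x \<and> chU x = {} \<and> l x = (ls, lt)"
  using assms(1-3)
proof (induction "depth_sum (ls, lt) - depth_sum (l e)" arbitrary: e rule: less_induct)
  case less
  show ?case
  proof (cases "chU e = {}")
    case True
    then have "chS (fst (l e)) = {}" "chT (snd (l e)) = {}" using leaf_label less.prems(1) by auto
    then have "l e = (ls, lt)" using S.leaf_le_eq less.prems(2) T.leaf_le_eq less.prems(3) by (metis prod.collapse)
    then show ?thesis using True less.prems(1) U.le_refl by blast
  next
    case False
    then obtain c where c: "c \<in> chU e" "S.le (fst (l c)) ls" "T.le (snd (l c)) lt"
        "depth_sum (l e) < depth_sum (l c)"
      using child_towards_leaf[OF less.prems(1) _ less.prems(2,3) leaves] by blast
    have "depth_sum (l c) \<le> depth_sum (ls, lt)"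
      using S.depth_mono[OF c(2)] T.depth_mono[OF c(3)] assms(6,7) unfolding depth_sum_def by simp
    then have "depth_sum (ls, lt) - depth_sum (l c) < depth_sum (ls, lt) - depth_sum (l e)"
      using c(4) by simp
    then obtain x where "x \<in> EU" "U.le c x" "chU x = {}" "l x = (ls, lt)"
      using less.hyps U.child_in_E[OF less.prems(1) c(1)] c(2,3) by blast
    then show ?thesis using U.le_trans[OF U.le_child[OF less.prems(1) c(1)]] by blast
  qed
qed

text \<open>Edges whose labels are comparable lie on a common branch, namely the branch leading to any leaf
  above the larger label.\<close>

lemma lab_le_comparable:
  assumes e: "e \<in> EU" "e' \<in> EU"
    and le: "S.le (fst (l e')) (fst (l e))" "T.le (snd (l e')) (snd (l e))"
  shows "U.le e e' \<or> U.le e' e"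
proof -
  obtain ls where ls: "S.le (fst (l e)) ls" "ls \<in> ES" "chS ls = {}"
    using S.exists_leaf_above lab_components(1)[OF e(1)] by blast
  obtain lt where lt: "T.le (snd (l e)) lt" "lt \<in> ET" "chT lt = {}"
    using T.exists_leaf_above lab_components(2)[OF e(1)] by blast
  obtain x1 where x1: "x1 \<in> EU" "U.le e x1" "chU x1 = {}" "l x1 = (ls, lt)"
    using leaf_above_label[OF e(1) ls(1) lt(1) ls(3) lt(3) ls(2) lt(2)] by blast
  obtain x2 where x2: "x2 \<in> EU" "U.le e' x2" "chU x2 = {}" "l x2 = (ls, lt)"
    using leaf_above_label[OF e(2) _ _ ls(3) lt(3) ls(2) lt(2)] le ls(1) lt(1) S.le_trans T.le_trans
    by blast
  have "inj_on l {e \<in> EU. chU e = {}}" using lab_leaves by (rule bij_betw_imp_inj_on)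
  then have "x1 = x2" using inj_onD x1 x2 by fastforce
  then show ?thesis using U.le_comparable[OF x1(2) _ x1(1)] x2(2) by auto
qed

lemma inj_lab: "inj_on l EU"
proof (rule inj_onI)
  fix e1 e2 assume e: "e1 \<in> EU" "e2 \<in> EU" and eq: "l e1 = l e2"
  then have "U.le e1 e2 \<or> U.le e2 e1" using lab_le_comparable by simp
  then show "e1 = e2" using lab_neq_above e eq by metis
qed

lemma T_vertex_below:
  assumes e: "e \<in> EU" and lt: "T.lt t' (snd (l e))"
  shows "\<exists>x\<in>EU. U.le x e \<and> snd (l x) = t' \<and> has_T_vertex A x"
proof -
  have "(rU, e) \<in> U.child_rel\<^sup>*" using U.reachable e .
  then show ?thesis using lt e
  proof (induction arbitrary: t' rule: rtrancl_induct)
    case base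
    then show ?case using lab_root T.le_root T.lt_def by auto
  next
    case (step y z)
    have y: "y \<in> EU" "z \<in> chU y" using step(2) unfolding U.child_rel_def by auto
    from child_label_cases[OF y] show ?case
    proof
      assume "S_vertex y \<and> l z \<in> S_above (l y)"
      then have "snd (l z) = snd (l y)" unfolding S_above_def by auto
      then obtain x where "x \<in> EU" "U.le x y" "snd (l x) = t'" "has_T_vertex A x"
        using step(3)[of t'] step(4) y(1) by auto
      then show ?thesis using U.le_trans[OF _ U.le_child[OF y]] by blast
    next
      assume tv: "T_vertex y \<and> l z \<in> T_above (l y)"
      then have h: "snd (l z) \<in> chT (snd (l y))" unfolding T_above_def by auto
      have "t' = snd (l z) \<or> T.le t' (snd (l y))" using T.le_child_cases[OF _ h lab_components(2)[OF y(1)]] step(4) T.lt_def by auto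
      then have "t' = snd (l y) \<or> T.lt t' (snd (l y))" using step(4) T.lt_def by auto
      then show ?thesis
      proof
        assume "t' = snd (l y)"
        moreover have "has_T_vertex A y" using has_T_vertex_iff[OF y(1)] tv y(2) by auto
        ultimately show ?thesis using y U.le_child[OF y] by auto
      next
        assume "T.lt t' (snd (l y))"
        then obtain x where "x \<in> EU" "U.le x y" "snd (l x) = t'" "has_T_vertex A x"
          using step(3)[of t'] y(1) by auto
        then show ?thesis using U.le_trans[OF _ U.le_child[OF y]] by blast
      qed
    qed
  qed
qed

lemma ideal_of_A: "ideal_of A = {(a, b). a \<in> S.inner \<and> b \<in> T.inner \<and>
    (\<exists>e\<in>EU. snd (l e) = b \<and> S.le (fst (l e)) a \<and> has_T_vertex A e)}"
  unfolding ideal_of_def by simp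

lemma ideal_of_is_ideal: "ideal_of A \<in> ideals"
  unfolding ideals_def
proof (intro CollectI conjI ballI impI)
  show "ideal_of A \<subseteq> S.inner \<times> T.inner" unfolding ideal_of_A by auto
next
  fix x y assume x: "x \<in> ideal_of A" and y: "y \<in> S.inner \<times> T.inner" and le: "ideal_le y x"
  obtain a b where ab: "x = (a, b)" by fastforce
  obtain e where e: "e \<in> EU" "snd (l e) = b" "S.le (fst (l e)) a" "has_T_vertex A e"
    using x unfolding ab ideal_of_A by auto
  obtain a' b' where y': "y = (a', b')" "a' \<in> S.inner" "b' \<in> T.inner" "S.le a a'" "T.le b' b"
    using y le ab unfolding ideal_le_def by auto
  have "\<exists>x\<in>EU. snd (l x) = b' \<and> S.le (fst (l x)) a' \<and> has_T_vertex A x"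
  proof (cases "b' = b")
    case True
    then show ?thesis using e y'(4) S.le_trans by blast
  next
    case False
    then obtain x where "x \<in> EU" "U.le x e" "snd (l x) = b'" "has_T_vertex A x"
      using T_vertex_below[OF e(1)] e(2) y'(5) T.lt_def by blast
    moreover have "S.le (fst (l x)) a'" using lab_mono[OF \<open>U.le x e\<close> \<open>x \<in> EU\<close>] e(3) y'(4) S.le_trans by blast
    ultimately show ?thesis by blast
  qed
  then show "y \<in> ideal_of A" unfolding ideal_of_A using y' by auto
qed

lemma not_S_and_T_vertex: "S_vertex e \<Longrightarrow> T_vertex e \<Longrightarrow> e \<in> EU \<Longrightarrow> chU e \<noteq> {} \<Longrightarrow> False"
  using S_vertex_image T_vertex_image S_above_fst_neq lab_components(1) unfolding T_above_def
  by (metis (no_types, lifting) ex_in_conv fst_conv image_eqI image_iff)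

text \<open>A witness of \<open>(s, t)\<close> would lie on the branch through e, but it can be neither e itself
  nor below e.\<close>

lemma S_vertex_not_in_ideal:
  assumes e: "e \<in> EU" "chU e \<noteq> {}" and sv: "S_vertex e" and st: "l e = (s, t)"
  shows "(s, t) \<notin> ideal_of A"
proof
  assume "(s, t) \<in> ideal_of A"
  then obtain e' where e': "e' \<in> EU" "snd (l e') = t" "S.le (fst (l e')) s" "has_T_vertex A e'"
    unfolding ideal_of_A by auto
  have T_vertex': "T_vertex e'" using has_T_vertex_iff[OF e'(1)] e'(4) by auto
  have "e' \<noteq> e" using not_S_and_T_vertex[OF sv _ e] T_vertex' by auto
  have "U.le e e' \<or> U.le e' e" using lab_le_comparable[OF e(1) e'(1)] e'(2,3) st by simp
  then show False
  proof
    assume "U.le e e'"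
    then have "S.le s (fst (l e'))" using lab_mono[OF _ e(1)] st by fastforce
    then have "l e' = l e" using S.le_antisym e'(2,3) st by (metis prod.collapse)
    then show False using inj_onD[OF inj_lab] e(1) e'(1) \<open>e' \<noteq> e\<close> by blast
  next
    assume "U.le e' e"
    then obtain c where c: "c \<in> chU e'" "U.le c e"
      using U.lt_through_child[of e' e] \<open>e' \<noteq> e\<close> U.lt_def by auto
    have "l c \<in> T_above (l e')" using T_vertex_image[OF T_vertex'] c(1) by auto
    then have tc: "snd (l c) \<in> chT t" using e'(2) unfolding T_above_def by auto
    have "T.le (snd (l c)) t" using lab_mono[OF c(2) U.child_in_E[OF e'(1) c(1)]] st by auto
    then show False using T.not_le_child[OF _ tc] lab_components(2)[OF e(1)] st by simp
  qed
qed

lemma canonical_above_lab: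
  assumes e: "e \<in> EU"
  shows "l ` chU e = canonical_above (ideal_of A) (l e)"
proof -
  obtain s t where st: "l e = (s, t)" by fastforce
  show ?thesis
  proof (cases "chU e = {}")
    case True
    then have "chS s = {}" "chT t = {}" using leaf_label[OF e] st by auto
    then have "canonical_above (ideal_of A) (l e) = {}"
      using canonical_above_empty_iff st unfolding S.inner_def T.inner_def by simp
    then show ?thesis using True by simp
  next
    case ne: False
    from vertex_cases[OF e ne] show ?thesis
    proof
      assume sv: "S_vertex e"
      then have "s \<in> S.inner" using st unfolding S_vertex_def by simp
      then have "S_vertex_at (ideal_of A) (l e)"
        using S_vertex_not_in_ideal[OF e ne sv st] st unfolding S_vertex_at_def by simp
      then show ?thesis using S_vertex_image[OF sv] unfolding canonical_above_def by simp
    next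
      assume tv: "T_vertex e"
      then have tI: "t \<in> T.inner" using st unfolding T_vertex_def by simp
      have "has_T_vertex A e" using has_T_vertex_iff[OF e] tv ne by simp
      then have "s \<in> S.inner \<Longrightarrow> (s, t) \<in> ideal_of A" unfolding ideal_of_A using e st tI by force
      then have "\<not> S_vertex_at (ideal_of A) (l e) \<and> T_vertex_at (ideal_of A) (l e)"
        using tI st unfolding S_vertex_at_def T_vertex_at_def by auto
      then show ?thesis using T_vertex_image[OF tv] unfolding canonical_above_def by simp
    qed
  qed
qed

lemma lab_image: "l ` EU = canonical_edges (ideal_of A)"
proof (intro equalityI subsetI)
  fix z assume "z \<in> l ` EU"
  then obtain e where e: "e \<in> EU" "z = l e" by auto
  have "(rU, e) \<in> U.child_rel\<^sup>*" using U.reachable e(1) .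
  then have "l e \<in> canonical_edges (ideal_of A)" using e(1)
  proof (induction rule: rtrancl_induct)
    case base then show ?case using lab_root root_canonical by simp
  next
    case (step y z)
    have y: "y \<in> EU" "z \<in> chU y" using step(2) unfolding U.child_rel_def by auto
    have "l z \<in> canonical_above (ideal_of A) (l y)" using canonical_above_lab[OF y(1)] y(2) by blast
    then show ?case using canonical_above_subset[OF ideal_of_is_ideal step(3)[OF y(1)]] by blast
  qed
  then show "z \<in> canonical_edges (ideal_of A)" using e by simp
next
  fix z assume "z \<in> canonical_edges (ideal_of A)"
  then show "z \<in> l ` EU"
  proof (induction "depth_sum z" arbitrary: z rule: less_induct)
    case less
    show ?case
    proof (cases "z = (rS, rT)")
      case True then show ?thesis using lab_root U.root_in_E by force
    next
      case False
      then obtain q where q: "q \<in> canonical_edges (ideal_of A)" "z \<in> canonical_above (ideal_of A) q"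
          "depth_sum q < depth_sum z"
        using canonical_parent[OF ideal_of_is_ideal] less.prems by (cases z) blast
      then obtain e where e: "e \<in> EU" "q = l e" using less.hyps by blast
      then have "z \<in> l ` chU e" using canonical_above_lab[OF e(1)] q(2) by simp
      then show ?thesis using U.children_in_E[OF e(1)] by blast
    qed
  qed
qed

lemma iso_canonical: "ltree_iso A (canonical_shuffle (ideal_of A))"
  unfolding canonical_shuffle_def
proof (rule ltree_iso_ltree_of[OF finite_canonical_edges])
  show "bij_betw (lab A) (edges (ltree_tree A)) (canonical_edges (ideal_of A))"
    using inj_lab lab_image unfolding bij_betw_def by simp
  show "lab A (root (ltree_tree A)) = (rS, rT)" using lab_root by simp
next
  fix e assume "e \<in> edges (ltree_tree A)"
  then show "canonical_above (ideal_of A) (lab A e) = lab A ` above (ltree_tree A) e"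
    using canonical_above_lab by simp
qed

end

context two_trees
begin

lemma labelled_shuffleI:
  assumes "is_shuffle S_tree T_tree (EU, rU, chU, l)"
  shows "labelled_shuffle ES rS chS ET rT chT EU rU chU l"
proof -
  have "is_tree EU rU chU" using assms unfolding is_shuffle_def Let_def tree_def by simp
  then show ?thesis
    unfolding labelled_shuffle_def labelled_shuffle_axioms_def two_trees_def rooted_tree_def
    using assms S.tree_axioms T.tree_axioms by simp
qed

lemma shuffle_iso_canonical:
  assumes "is_shuffle S_tree T_tree A"
  shows "ltree_iso A (canonical_shuffle (ideal_of A))" and "ideal_of A \<in> ideals"
proof -
  obtain EU rU chU l where A: "A = (EU, rU, chU, l)" by (cases A) auto
  interpret labelled_shuffle ES rS chS ET rT chT EU rU chU l
    using labelled_shuffleI assms A by simp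
  show "ltree_iso A (canonical_shuffle (ideal_of A))" "ideal_of A \<in> ideals"
    using iso_canonical ideal_of_is_ideal A by simp_all
qed

lemma shuffle_tree: "is_shuffle S_tree T_tree A \<Longrightarrow> tree (ltree_tree A)"
  unfolding is_shuffle_def Let_def by simp

lemma ideal_of_iso_subset:
  assumes A: "tree (ltree_tree A)" and iso: "ltree_iso A B"
  shows "ideal_of A \<subseteq> ideal_of B"
proof
  obtain f where f: "bij_betw f (edges (ltree_tree A)) (edges (ltree_tree B))"
    "\<And>e. e \<in> edges (ltree_tree A) \<Longrightarrow>
      above (ltree_tree B) (f e) = f ` above (ltree_tree A) e \<and> lab B (f e) = lab A e"
    using iso unfolding ltree_iso_def by blast
  fix x assume "x \<in> ideal_of A"
  then obtain a b e where x: "x = (a, b)" "a \<in> S.inner" "b \<in> T.inner" "e \<in> edges (ltree_tree A)"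
    "snd (lab A e) = b" "S.le (fst (lab A e)) a" "has_T_vertex A e"
    unfolding ideal_of_def by auto
  have "above (ltree_tree A) e \<subseteq> edges (ltree_tree A)" using A x(4) by (cases A) (auto simp: tree_def is_tree_def)
  then have "has_T_vertex B (f e)" using has_T_vertex_transfer[OF x(7)] f(2) x(4) by blast
  moreover have "f e \<in> edges (ltree_tree B)" using bij_betwE[OF f(1)] x(4) by blast
  ultimately have "\<exists>e'\<in>edges (ltree_tree B). snd (lab B e') = b \<and> S.le (fst (lab B e')) a \<and> has_T_vertex B e'"
    using x f(2)[OF x(4)] by (intro bexI[of _ "f e"]) auto
  then show "x \<in> ideal_of B" unfolding ideal_of_def using x by auto
qed

lemma ideal_of_iso:
  "is_shuffle S_tree T_tree A \<Longrightarrow> is_shuffle S_tree T_tree B \<Longrightarrow> ltree_iso A B \<Longrightarrow> ideal_of A = ideal_of B"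
  using ideal_of_iso_subset ltree_iso_sym shuffle_tree by (metis subset_antisym)

section \<open>Isomorphism classes of shuffles\<close>

definition iso_class :: "('e \<times> 'f) ltree \<Rightarrow> ('e \<times> 'f) ltree set" where
  "iso_class A = {B. is_shuffle S_tree T_tree B \<and> ltree_iso A B}"

definition class_ideal :: "('e \<times> 'f) ltree set \<Rightarrow> ('e \<times> 'f) set" where
  "class_ideal C = ideal_of (SOME A. A \<in> C)"

lemma Sh_eq_iso_classes: "Sh S_tree T_tree = {iso_class A | A. is_shuffle S_tree T_tree A}"
  unfolding Sh_def iso_class_def by simp

lemma iso_class_self: "is_shuffle S_tree T_tree A \<Longrightarrow> A \<in> iso_class A"
  unfolding iso_class_def using ltree_iso_refl by simp

lemma iso_class_memD: "is_shuffle S_tree T_tree A \<Longrightarrow> B \<in> iso_class A \<Longrightarrow>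
    is_shuffle S_tree T_tree B \<and> ideal_of B = ideal_of A"
proof -
  assume A: "is_shuffle S_tree T_tree A" and "B \<in> iso_class A"
  then have h: "is_shuffle S_tree T_tree B" "ltree_iso A B" unfolding iso_class_def by auto
  show ?thesis using ideal_of_iso[OF A h(1) h(2)] h(1) by simp
qed

lemma class_ideal_iso_class: "is_shuffle S_tree T_tree A \<Longrightarrow> class_ideal (iso_class A) = ideal_of A"
proof -
  assume A: "is_shuffle S_tree T_tree A"
  have "(SOME B. B \<in> iso_class A) \<in> iso_class A" using someI[of "\<lambda>B. B \<in> iso_class A", OF iso_class_self[OF A]] .
  then show ?thesis unfolding class_ideal_def using iso_class_memD[OF A] by simp
qed

lemma iso_class_eq_iff:
  assumes A: "is_shuffle S_tree T_tree A" and B: "is_shuffle S_tree T_tree B"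
  shows "iso_class A = iso_class B \<longleftrightarrow> ideal_of A = ideal_of B"
proof
  assume "iso_class A = iso_class B"
  then have "B \<in> iso_class A" using iso_class_self[OF B] by simp
  then show "ideal_of A = ideal_of B" using iso_class_memD[OF A] by simp
next
  assume eq: "ideal_of A = ideal_of B"
  have iA: "ltree_iso A (canonical_shuffle (ideal_of A))" using shuffle_iso_canonical[OF A] by auto
  have iB: "ltree_iso B (canonical_shuffle (ideal_of B))" using shuffle_iso_canonical[OF B] by auto
  have "ltree_iso (canonical_shuffle (ideal_of A)) B" using ltree_iso_sym[OF shuffle_tree[OF B] iB] eq by simp
  then have AB: "ltree_iso A B" using ltree_iso_trans[OF iA] by blast
  have BA: "ltree_iso B A" using ltree_iso_sym[OF shuffle_tree[OF A] AB] .
  show "iso_class A = iso_class B"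
  proof
    show "iso_class A \<subseteq> iso_class B" unfolding iso_class_def using ltree_iso_trans[OF BA] by blast
    show "iso_class B \<subseteq> iso_class A" unfolding iso_class_def using ltree_iso_trans[OF AB] by blast
  qed
qed

lemma iso_class_canonical:
  "is_shuffle S_tree T_tree A \<Longrightarrow> iso_class A = iso_class (canonical_shuffle (ideal_of A))"
proof -
  assume A: "is_shuffle S_tree T_tree A"
  have DA: "ideal_of A \<in> ideals" using shuffle_iso_canonical[OF A] by simp
  show ?thesis using iso_class_eq_iff[OF A canonical_shuffle_is_shuffle[OF DA]] ideal_of_canonical[OF DA] by simp
qed

lemma Sh_eq_canonical: "Sh S_tree T_tree = (\<lambda>D. iso_class (canonical_shuffle D)) ` ideals"
proof
  show "Sh S_tree T_tree \<subseteq> (\<lambda>D. iso_class (canonical_shuffle D)) ` ideals"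
  proof
    fix C assume "C \<in> Sh S_tree T_tree"
    then obtain A where A: "is_shuffle S_tree T_tree A" "C = iso_class A" unfolding Sh_eq_iso_classes by auto
    have "ideal_of A \<in> ideals" using shuffle_iso_canonical[OF A(1)] by simp
    then show "C \<in> (\<lambda>D. iso_class (canonical_shuffle D)) ` ideals" using iso_class_canonical[OF A(1)] A(2) by blast
  qed
  show "(\<lambda>D. iso_class (canonical_shuffle D)) ` ideals \<subseteq> Sh S_tree T_tree"
  proof
    fix C assume "C \<in> (\<lambda>D. iso_class (canonical_shuffle D)) ` ideals"
    then obtain D where "D \<in> ideals" "C = iso_class (canonical_shuffle D)" by auto
    then show "C \<in> Sh S_tree T_tree" unfolding Sh_eq_iso_classes using canonical_shuffle_is_shuffle by blast
  qed
qed

lemma class_ideal_canonical: "D \<in> ideals \<Longrightarrow> class_ideal (iso_class (canonical_shuffle D)) = D"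
  using class_ideal_iso_class[OF canonical_shuffle_is_shuffle] ideal_of_canonical by simp

lemma bij_betw_class_ideal: "bij_betw class_ideal (Sh S_tree T_tree) ideals"
  unfolding bij_betw_def
proof
  show "inj_on class_ideal (Sh S_tree T_tree)"
  proof (rule inj_onI)
    fix C1 C2 assume "C1 \<in> Sh S_tree T_tree" "C2 \<in> Sh S_tree T_tree" "class_ideal C1 = class_ideal C2"
    then obtain D1 D2 where "D1 \<in> ideals" "D2 \<in> ideals"
        "C1 = iso_class (canonical_shuffle D1)" "C2 = iso_class (canonical_shuffle D2)"
      unfolding Sh_eq_canonical by auto
    then show "C1 = C2" using class_ideal_canonical \<open>class_ideal C1 = class_ideal C2\<close> by simp
  qed
  show "class_ideal ` Sh S_tree T_tree = ideals"
  proof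
    show "class_ideal ` Sh S_tree T_tree \<subseteq> ideals" unfolding Sh_eq_canonical using class_ideal_canonical by auto
    show "ideals \<subseteq> class_ideal ` Sh S_tree T_tree"
    proof
      fix D assume "D \<in> ideals"
      then have "D = class_ideal (iso_class (canonical_shuffle D))"
          "iso_class (canonical_shuffle D) \<in> Sh S_tree T_tree"
        using class_ideal_canonical Sh_eq_canonical by auto
      then show "D \<in> class_ideal ` Sh S_tree T_tree" by blast
    qed
  qed
qed

section \<open>Percolation\<close>

text \<open>A percolation step moves T-vertices below an S-vertex, so the ideal can only grow.\<close>

lemma ideal_of_perc_step:
  assumes step: "perc_step S_tree T_tree A B"
  shows "ideal_of A \<subseteq> ideal_of B"
proof
  obtain EA rA chA lA where A: "A = (EA, rA, chA, lA)" by (cases A) auto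
  obtain EB rB chB lB where B: "B = (EB, rB, chB, lB)" by (cases B) auto
  interpret A: labelled_shuffle ES rS chS ET rT chT EA rA chA lA
    using labelled_shuffleI step A unfolding perc_step_def by simp
  obtain a X Y \<phi> s t where P: "a \<in> EA" "lA a = (s, t)" "chA a = X" "chS s \<noteq> {}" "chT t \<noteq> {}"
    "bij_betw lA X ((\<lambda>s'. (s', t)) ` chS s)" "Y \<subseteq> EB" "bij_betw \<phi> (EA - X) (EB - Y)"
    "\<forall>e\<in>EA - X. lB (\<phi> e) = lA e" "\<forall>e\<in>EA - X - {a}. chB (\<phi> e) = \<phi> ` chA e"
    "chB (\<phi> a) = Y" "bij_betw lB Y ((\<lambda>t'. (s, t')) ` chT t)"
    using perc_stepE[OF step[unfolded A B]] by (metis tree_simps(3))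
  have aX: "a \<notin> X" using P(3) A.U.child_neq[OF P(1)] by auto
  have sE: "s \<in> ES" using A.lab_components[OF P(1)] P(2) by simp
  have lab_a: "lB (\<phi> a) = (s, t)" using P(9) P(1) aX P(2) by simp
  fix x assume "x \<in> ideal_of A"
  then obtain x1 b e where x: "x = (x1, b)" "x1 \<in> S.inner" "b \<in> T.inner" "e \<in> EA"
    "snd (lA e) = b" "S.le (fst (lA e)) x1" "has_T_vertex A e"
    unfolding ideal_of_def A by auto
  have witness: "x \<in> ideal_of B"
    if "w \<in> EB" "snd (lB w) = b" "S.le (fst (lB w)) x1" "has_T_vertex B w" for w
  proof -
    have "\<exists>e\<in>edges (ltree_tree B). snd (lab B e) = b \<and> S.le (fst (lab B e)) x1 \<and> has_T_vertex B e"
      using that B by (intro bexI[of _ w]) auto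
    then show ?thesis unfolding ideal_of_def using x by auto
  qed
  consider "e \<in> X" | "e = a" | "e \<in> EA - X - {a}" using x(4) by blast
  then show "x \<in> ideal_of B"
  proof cases
    case 1
    txt \<open>The T-vertex above e, for t, now sits above \<open>\<phi> a\<close>.\<close>
    then obtain si where si: "si \<in> chS s" "lA e = (si, t)" using bij_betwE[OF P(6)] by blast
    have "Y \<noteq> {}" using P(12) P(5) by (metis bij_betw_imp_surj_on image_is_empty)
    moreover have "fst (lB c) = s" if "c \<in> Y" for c using that bij_betwE[OF P(12)] by auto
    ultimately have "has_T_vertex B (\<phi> a)" unfolding has_T_vertex_def B using P(11) lab_a by simp
    moreover have "S.le s x1" using S.le_trans[OF S.le_child[OF sE si(1)]] x(6) si(2) by simp
    moreover have "\<phi> a \<in> EB" using bij_betwE[OF P(8)] P(1) aX by blast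
    ultimately show ?thesis using witness[of "\<phi> a"] lab_a x(5) si(2) by simp
  next
    case 2
    obtain c where "c \<in> X" using P(4,6) by (metis bij_betw_imp_surj_on image_is_empty ex_in_conv)
    then obtain si where "si \<in> chS s" "lA c = (si, t)" using bij_betwE[OF P(6)] by blast
    then have "fst (lA c) \<noteq> s" using S.child_neq[OF sE] by simp
    then show ?thesis using x(7) \<open>c \<in> X\<close> P(2,3) 2 unfolding has_T_vertex_def A by auto
  next
    case 3
    have "c \<notin> X" if "c \<in> chA e" for c
      using that A.U.same_parent[OF x(4) P(1)] P(3) 3 by blast
    then have "lB (\<phi> c) = lA c" if "c \<in> chA e" for c
      using that P(9) A.U.child_in_E[OF x(4)] by blast
    then have "has_T_vertex B (\<phi> e)"
      using has_T_vertex_transfer[OF x(7), of B "\<phi> e" \<phi>] P(9,10) 3 unfolding A B by auto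
    moreover have "\<phi> e \<in> EB" "lB (\<phi> e) = lA e" using bij_betwE[OF P(8)] 3 P(9) by auto
    ultimately show ?thesis using witness[of "\<phi> e"] x(5,6) by simp
  qed
qed

lemma canonical_above_insert: "z \<noteq> x \<Longrightarrow> canonical_above (insert x D) z = canonical_above D z"
  unfolding canonical_above_def S_vertex_at_def T_vertex_at_def by simp

context
  fixes D :: "('e \<times> 'f) set" and s :: 'e and t :: 'f
  assumes D: "D \<in> ideals" and D': "insert (s, t) D \<in> ideals" and new: "(s, t) \<notin> D"
begin

lemma added_inner: "s \<in> S.inner" "t \<in> T.inner" "s \<in> ES" "t \<in> ET"
  using ideal_subset[OF D'] inner_in_E by auto

lemma added_canonical: "(s, t) \<in> canonical_edges D"
proof -
  have "canonical_edge D s t" unfolding canonical_edge_def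
  proof (intro conjI impI allI)
    fix b' assume "T.lt b' t"
    then show "(s, b') \<in> D" using ideal_T_down[OF D'] T.lt_def by auto
  next
    fix a' assume "S.lt a' s"
    then show "(a', t) \<notin> D" using ideal_S_up[OF D _ _ added_inner(1)] new S.lt_def by blast
  qed
  then show ?thesis using added_inner unfolding canonical_edges_def by simp
qed

lemma canonical_above_added_before: "canonical_above D (s, t) = S_above (s, t)"
  using added_inner new unfolding canonical_above_def S_vertex_at_def by simp

lemma canonical_above_added_after: "canonical_above (insert (s, t) D) (s, t) = T_above (s, t)"
  using added_inner unfolding canonical_above_def S_vertex_at_def T_vertex_at_def by simp

lemma canonical_above_S_child_before:
  assumes si: "si \<in> chS s"
  shows "canonical_above D (si, t) = T_above (si, t)"
proof -
  have "si \<noteq> s" using S.child_neq[OF added_inner(3) si] .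
  moreover have "si \<in> S.inner \<Longrightarrow> (si, t) \<in> insert (s, t) D"
    using ideal_S_up[OF D' _ S.le_child[OF added_inner(3) si]] by blast
  ultimately show ?thesis using added_inner unfolding canonical_above_def S_vertex_at_def T_vertex_at_def by auto
qed

lemma T_child_not_added: "tj \<in> chT t \<Longrightarrow> (s, tj) \<notin> insert (s, t) D"
  using T.child_neq[OF added_inner(4)] ideal_T_down[OF D _ T.lt_child[OF added_inner(4)]] new by blast

lemma canonical_above_T_child_after:
  "tj \<in> chT t \<Longrightarrow> canonical_above (insert (s, t) D) (s, tj) = S_above (s, tj)"
  using T_child_not_added added_inner unfolding canonical_above_def S_vertex_at_def by simp

text \<open>Only the edges between the two swapped vertices change.\<close>

lemma canonical_edges_added:
  "canonical_edges D - S_above (s, t) = canonical_edges (insert (s, t) D) - T_above (s, t)"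
proof (rule Set.set_eqI)
  let ?D' = "insert (s, t) D"
  fix z :: "'e \<times> 'f"
  obtain a b where z: "z = (a, b)" by fastforce
  consider (above_T) "a = s" "T.lt t b" | (above_S) "b = t" "S.lt s a"
    | (other) "\<not> (a = s \<and> T.lt t b)" "\<not> (b = t \<and> S.lt s a)"
    by blast
  then show "z \<in> canonical_edges D - S_above (s, t) \<longleftrightarrow> z \<in> canonical_edges ?D' - T_above (s, t)"
  proof cases
    case above_T
    have "z \<notin> canonical_edges ?D' - T_above (s, t)"
    proof
      assume h: "z \<in> canonical_edges ?D' - T_above (s, t)"
      obtain tj where tj: "tj \<in> chT t" "T.le tj b" using T.lt_through_child[OF above_T(2)] by auto
      have "tj \<noteq> b" using h z above_T tj(1) unfolding T_above_def by auto
      then have "T.lt tj b" using tj(2) T.lt_def by simp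
      then have "(s, tj) \<in> ?D'" using h z above_T added_inner unfolding canonical_edges_def canonical_edge_def by auto
      then show False using T_child_not_added[OF tj(1)] by simp
    qed
    moreover have "z \<notin> canonical_edges D"
      using above_T new added_inner z unfolding canonical_edges_def canonical_edge_def by auto
    ultimately show ?thesis by simp
  next
    case above_S
    have "z \<notin> canonical_edges D - S_above (s, t)"
    proof
      assume h: "z \<in> canonical_edges D - S_above (s, t)"
      obtain si where si: "si \<in> chS s" "S.le si a" using S.lt_through_child[OF above_S(2)] by auto
      have "si \<noteq> a" using h z above_S si(1) unfolding S_above_def by auto
      then have lt: "S.lt si a" using si(2) S.lt_def by simp
      then have "(si, t) \<notin> D" using h z above_S added_inner unfolding canonical_edges_def canonical_edge_def by auto
      moreover have "si \<noteq> s" using S.child_neq[OF added_inner(3) si(1)] .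
      moreover have "(si, t) \<in> ?D'"
        using ideal_S_up[OF D' _ S.le_child[OF added_inner(3) si(1)] S.lt_inner[OF lt]] by blast
      ultimately show False by simp
    qed
    moreover have "z \<notin> canonical_edges ?D'"
      using above_S added_inner z unfolding canonical_edges_def canonical_edge_def by auto
    ultimately show ?thesis by simp
  next
    case other
    have "canonical_edge D a b \<longleftrightarrow> canonical_edge ?D' a b"
      unfolding canonical_edge_def using other by auto
    moreover have "z \<notin> S_above (s, t)" using other z S.lt_child[OF added_inner(3)] unfolding S_above_def by auto
    moreover have "z \<notin> T_above (s, t)" using other z T.lt_child[OF added_inner(4)] unfolding T_above_def by auto
    ultimately show ?thesis using z unfolding canonical_edges_def by auto
  qed
qed

lemma perc_step_canonical:
  "perc_step S_tree T_tree (canonical_shuffle D) (canonical_shuffle (insert (s, t) D))"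
  unfolding canonical_shuffle_def
proof (rule perc_step_ltree_of)
  show "is_shuffle S_tree T_tree (ltree_of (canonical_edges D) (rS, rT) (canonical_above D))"
    "is_shuffle S_tree T_tree (ltree_of (canonical_edges (insert (s, t) D)) (rS, rT)
       (canonical_above (insert (s, t) D)))"
    using canonical_shuffle_is_shuffle[OF D] canonical_shuffle_is_shuffle[OF D']
    unfolding canonical_shuffle_def by simp_all
  show "is_tree (canonical_edges D) (rS, rT) (canonical_above D)"
    "is_tree (canonical_edges (insert (s, t) D)) (rS, rT) (canonical_above (insert (s, t) D))"
    using is_tree_canonical D D' by simp_all
  show "(s, t) \<in> canonical_edges D" by (rule added_canonical)
  show "above S_tree s \<noteq> {}" "above T_tree t \<noteq> {}"
    using added_inner unfolding S.inner_def T.inner_def by simp_all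
  show "canonical_above D (s, t) = (\<lambda>s'. (s', t)) ` above S_tree s"
    "canonical_above (insert (s, t) D) (s, t) = Pair s ` above T_tree t"
    using canonical_above_added_before canonical_above_added_after
    unfolding S_above_def T_above_def by simp_all
  show "canonical_edges D - (\<lambda>s'. (s', t)) ` above S_tree s =
      canonical_edges (insert (s, t) D) - Pair s ` above T_tree t"
    using canonical_edges_added unfolding S_above_def T_above_def by simp
next
  fix x assume "x \<in> (\<lambda>s'. (s', t)) ` above S_tree s"
  then show "canonical_above D x = Pair (fst x) ` above T_tree t"
    using canonical_above_S_child_before unfolding T_above_def by auto
next
  fix y assume "y \<in> Pair s ` above T_tree t"
  then obtain tj where tj: "tj \<in> chT t" "y = (s, tj)" by auto
  have "{z. \<exists>x\<in>(\<lambda>s'. (s', t)) ` chS s. z \<in> canonical_above D x \<and> snd z = tj} = S_above (s, tj)"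
    using canonical_above_S_child_before T.child_neq[OF added_inner(4)] tj(1)
    unfolding S_above_def T_above_def by auto
  then show "canonical_above (insert (s, t) D) y =
      {z. \<exists>x\<in>(\<lambda>s'. (s', t)) ` above S_tree s. z \<in> canonical_above D x \<and> snd z = snd y}"
    using canonical_above_T_child_after[OF tj(1)] tj(2) by simp
next
  fix z assume "z \<in> canonical_edges D - (\<lambda>s'. (s', t)) ` above S_tree s - {(s, t)}"
  then show "canonical_above (insert (s, t) D) z = canonical_above D z"
    using canonical_above_insert by blast
qed

end

lemma class_ideal_perc_rel: "perc_rel S_tree T_tree C1 C2 \<Longrightarrow> class_ideal C1 \<subseteq> class_ideal C2"
proof -
  assume "perc_rel S_tree T_tree C1 C2"
  then obtain A B where h: "C1 \<in> Sh S_tree T_tree" "C2 \<in> Sh S_tree T_tree" "A \<in> C1" "B \<in> C2"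
    "perc_step S_tree T_tree A B"
    unfolding perc_rel_def by blast
  obtain A0 where A0: "is_shuffle S_tree T_tree A0" "C1 = iso_class A0" using h(1) unfolding Sh_eq_iso_classes by auto
  obtain B0 where B0: "is_shuffle S_tree T_tree B0" "C2 = iso_class B0" using h(2) unfolding Sh_eq_iso_classes by auto
  have "class_ideal C1 = ideal_of A" using class_ideal_iso_class[OF A0(1)] iso_class_memD[OF A0(1)] h(3) A0(2) by simp
  moreover have "class_ideal C2 = ideal_of B" using class_ideal_iso_class[OF B0(1)] iso_class_memD[OF B0(1)] h(4) B0(2) by simp
  ultimately show ?thesis using ideal_of_perc_step[OF h(5)] by simp
qed

lemma ideal_le_trans: "ideal_le z y \<Longrightarrow> ideal_le y x \<Longrightarrow> ideal_le z x"
  and ideal_le_antisym: "ideal_le y x \<Longrightarrow> ideal_le x y \<Longrightarrow> y = x"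
  unfolding ideal_le_def using S.le_trans T.le_trans S.le_antisym T.le_antisym by (auto simp: prod_eq_iff)

lemma ideal_insert_minimal:
  assumes D1: "D1 \<in> ideals" and D2: "D2 \<in> ideals" and x: "x \<in> D2 - D1"
    and minimal: "\<And>y. y \<in> D2 - D1 \<Longrightarrow> ideal_le y x \<Longrightarrow> y = x"
  shows "insert x D1 \<in> ideals"
  unfolding ideals_def
proof (intro CollectI conjI ballI impI)
  show "insert x D1 \<subseteq> S.inner \<times> T.inner" using ideal_subset[OF D1] ideal_subset[OF D2] x by auto
next
  fix z y assume z: "z \<in> insert x D1" and y: "y \<in> S.inner \<times> T.inner" and le: "ideal_le y z"
  show "y \<in> insert x D1"
  proof (cases "z \<in> D1")
    case True
    then show ?thesis using D1 y le unfolding ideals_def by blast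
  next
    case False
    then have "z = x" using z by simp
    then have "y \<in> D2" using D2 x y le unfolding ideals_def by blast
    then show ?thesis using minimal le \<open>z = x\<close> by blast
  qed
qed

lemma ideal_extend_by_one:
  assumes D1: "D1 \<in> ideals" and D2: "D2 \<in> ideals" and sub: "D1 \<subset> D2"
  shows "\<exists>x\<in>D2 - D1. insert x D1 \<in> ideals"
proof -
  let ?R = "\<lambda>y x. ideal_le y x \<and> y \<noteq> x"
  have "finite (D2 - D1)" using finite_ideal[OF D2] by simp
  moreover have "asymp_on (D2 - D1) ?R"
    by (rule asymp_onI) (use ideal_le_antisym in blast)
  moreover have "transp_on (D2 - D1) ?R"
    by (rule transp_onI) (use ideal_le_trans ideal_le_antisym in blast)
  moreover have "D2 - D1 \<noteq> {}" using sub by blast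
  ultimately obtain x where "x \<in> D2 - D1" "\<forall>y\<in>D2 - D1. y \<noteq> x \<longrightarrow> \<not> ?R y x"
    using Finite_Set.bex_min_element[of "D2 - D1" ?R] by blast
  then show ?thesis using ideal_insert_minimal[OF D1 D2] by blast
qed

lemma perc_rel_canonical_insert:
  assumes "D \<in> ideals" "insert x D \<in> ideals" "x \<notin> D"
  shows "perc_rel S_tree T_tree (iso_class (canonical_shuffle D)) (iso_class (canonical_shuffle (insert x D)))"
proof -
  obtain s t where x: "x = (s, t)" by fastforce
  have "perc_step S_tree T_tree (canonical_shuffle D) (canonical_shuffle (insert x D))"
    using perc_step_canonical assms unfolding x by blast
  moreover have "canonical_shuffle D \<in> iso_class (canonical_shuffle D)"
    "canonical_shuffle (insert x D) \<in> iso_class (canonical_shuffle (insert x D))"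
    using iso_class_self canonical_shuffle_is_shuffle assms by blast+
  ultimately show ?thesis unfolding perc_rel_def Sh_eq_canonical using assms by blast
qed

lemma perc_rel_chain:
  assumes D1: "D1 \<in> ideals" and D2: "D2 \<in> ideals" and sub: "D1 \<subseteq> D2"
  shows "(perc_rel S_tree T_tree)\<^sup>*\<^sup>* (iso_class (canonical_shuffle D1)) (iso_class (canonical_shuffle D2))"
  using D1 sub
proof (induction "card (D2 - D1)" arbitrary: D1)
  case 0
  then have "D1 = D2" using finite_ideal[OF D2] by (simp add: card_eq_0_iff)
  then show ?case by simp
next
  case (Suc n)
  then have "D1 \<subset> D2" by auto
  then obtain x where x: "x \<in> D2 - D1" "insert x D1 \<in> ideals"
    using ideal_extend_by_one[OF Suc.prems(1) D2] by blast
  have "D2 - insert x D1 = (D2 - D1) - {x}" by blast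
  then have "n = card (D2 - insert x D1)" using Suc.hyps(2) x(1) finite_ideal[OF D2] by simp
  moreover have "insert x D1 \<subseteq> D2" using x(1) Suc.prems(2) by blast
  ultimately have "(perc_rel S_tree T_tree)\<^sup>*\<^sup>* (iso_class (canonical_shuffle (insert x D1)))
      (iso_class (canonical_shuffle D2))"
    using Suc.hyps(1) x(2) by blast
  moreover have "perc_rel S_tree T_tree (iso_class (canonical_shuffle D1))
      (iso_class (canonical_shuffle (insert x D1)))"
    using perc_rel_canonical_insert[OF Suc.prems(1) x(2)] x(1) by blast
  ultimately show ?case by (rule converse_rtranclp_into_rtranclp[rotated])
qed

lemma perc_le_iff:
  assumes C1: "C1 \<in> Sh S_tree T_tree" and C2: "C2 \<in> Sh S_tree T_tree"
  shows "perc_le S_tree T_tree C1 C2 \<longleftrightarrow> class_ideal C1 \<subseteq> class_ideal C2"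
proof
  assume "perc_le S_tree T_tree C1 C2"
  then have "(perc_rel S_tree T_tree)\<^sup>*\<^sup>* C1 C2" unfolding perc_le_def by simp
  then show "class_ideal C1 \<subseteq> class_ideal C2"
    by (induction rule: rtranclp_induct) (use class_ideal_perc_rel in blast)+
next
  assume "class_ideal C1 \<subseteq> class_ideal C2"
  moreover have "class_ideal C1 \<in> ideals" "class_ideal C2 \<in> ideals"
    using bij_betwE[OF bij_betw_class_ideal] C1 C2 by blast+
  moreover have "C = iso_class (canonical_shuffle (class_ideal C))" if "C \<in> Sh S_tree T_tree" for C
    using that Sh_eq_canonical class_ideal_canonical by auto
  ultimately show "perc_le S_tree T_tree C1 C2"
    unfolding perc_le_def using C1 C2 perc_rel_chain by metis
qed

end

theorem mainTheorem9:
  fixes S :: "'e tree" and T :: "'f tree"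
  assumes "tree S" and "tree T"
  shows "finite (Sh S T) \<and> distrib_lattice_on (Sh_poset S T)"
proof -
  obtain ES rS chS where S: "S = (ES, rS, chS)" by (cases S) auto
  obtain ET rT chT where T: "T = (ET, rT, chT)" by (cases T) auto
  interpret two_trees ES rS chS ET rT chT
    using assms unfolding S T two_trees_def rooted_tree_def tree_def by simp
  interpret set_lattice_image "Sh S T" "perc_le S T" class_ideal ideals
    using bij_betw_class_ideal perc_le_iff ideals_Un ideals_Int unfolding S T by unfold_locales
  have "finite (Sh S T)" using Sh_eq_canonical finite_ideals unfolding S T by simp
  moreover have "distrib_lattice_on (Sh_poset S T)" using distrib_lattice unfolding Sh_poset_def .
  ultimately show ?thesis ..
qed

end
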